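(* For all $n\ge1$, $Q_{\lambda_{\mathcal{NC}}}(\mathcal{NC}_n)\cong\mathcal{NCD}yck_n$.
   Context: A partition of $[n]$ is noncrossing if there are no $a<b<c<d$ with $a,c$ in one block and $b,d$ in another. $\mathcal{NC}_n$ is the set of noncrossing partitions of $[n]$ ordered by refinement; a cover $\pi\lessdot\sigma$ merges two blocks $B_i,B_j$, and if $\min B_i<\min B_j$ then $\lambda_{\mathcal{NC}}(\pi\lessdot\sigma)=\max\{a\in B_i:a<\min B_j\}$ (integer labels). $Q_\lambda(P)$ for an edge labeling $\lambda$ of a graded poset $P$ with $\hat 0$ having the rank two switching property (for every saturated chain $\hat0=x_0\lessdot\cdots\lessdot x_k$ and $i$ with $\lambda(x_{i-1}\lessdot x_i)<\lambda(x_i\lessdot x_{i+1})$ there is a unique $x_i'$ with $x_{i-1}\lessdot x_i'\lessdot x_{i+1}$ whose labels are those two labels swapped): $C(P)$ is the set of saturated chains from $\hat0$ ordered by inclusion; $\mathbf c_1\sim_\lambda\mathbf c_2$ iff they end at the same $y$ and are connected by quadratic exchanges (replacing $x_i$ by $x_i'$, forwards or backwards) among maximal chains of $[\hat0,y]$; $Q_\lambda(P)$ is the set of classes ordered by the transitive closure of: $X\le Y$ if some $\mathbf c\in X$, $\mathbf d\in Y$ have $\mathbf c\subseteq\mathbf d$. ($\lambda_{\mathcal{NC}}$ has this property.) Labeled Dyck paths: for a finite set $B=\{b_1<\cdots<b_j\}\subseteq[n]$, a labeled Dyck path on $B$ is a lattice path from $(0,0)$ to $(j-1,j-1)$ with unit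 north and east steps never going below $y=x$, where the bottom point $(i-1,0)$ carries the label $b_i$; equivalently it is a function $e:B\to\mathbb Z_{\ge0}$ ($e(b_i)$ = number of north steps on the line $x=i-1$) with $\sum_i e(b_i)=j-1$ and $e(b_1)+\cdots+e(b_i)\ge i$ for $1\le i\le j-1$. Merging: given labeled Dyck paths $e$ on $B$ and $f$ on $C$ with $B\cap C=\emptyset$, $b_1=\min B<\min C$, and $C$ contained in an interval $(b_i,b_{i+1})$ of consecutive elements of $B$ (with $b_{j+1}=\infty$), the merge is the labeled Dyck path $g$ on $B\cup C$ with $g=f$ on $C$, $g=e$ on $B\setminus\{b_i\}$ and $g(b_i)=e(b_i)+1$ (here $b_i=\max\{b\in B:b<\min C\}$). $\mathcal{NCD}yck_n$ is the set of collections of labeled Dyck paths whose label sets form a noncrossing partition of $[n]$, partially ordered as the reflexive-transitive closure of the relation $F\lessdot F'$ whenever $F'$ is obtained from $F$ by merging two of its labeled Dyck paths (with the resulting label sets still a noncrossing partition). *)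

theory Defs
  imports Main "HOL-Library.Disjoint_Sets" "HOL-Library.Sublist"
begin

definition pcover :: "'a set \<Rightarrow> ('a \<Rightarrow> 'a \<Rightarrow> bool) \<Rightarrow> 'a \<Rightarrow> 'a \<Rightarrow> bool" where
  "pcover P le x y \<longleftrightarrow> x \<in> P \<and> y \<in> P \<and> le x y \<and> x \<noteq> y \<and>
     (\<forall>z\<in>P. le x z \<and> le z y \<longrightarrow> z = x \<or> z = y)"

definition sat_chains :: "'a set \<Rightarrow> ('a \<Rightarrow> 'a \<Rightarrow> bool) \<Rightarrow> 'a \<Rightarrow> 'a list set" where
  "sat_chains P le z0 = {c. c \<noteq> [] \<and> hd c = z0 \<and> set c \<subseteq> P \<and>
     (\<forall>i. Suc i < length c \<longrightarrow> pcover P le (c ! i) (c ! Suc i))}"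

definition quad_exch :: "'a set \<Rightarrow> ('a \<Rightarrow> 'a \<Rightarrow> bool) \<Rightarrow> ('a \<Rightarrow> 'a \<Rightarrow> 'l::linorder)
    \<Rightarrow> 'a list \<Rightarrow> 'a list \<Rightarrow> bool" where
  "quad_exch P le lam c d \<longleftrightarrow> (\<exists>i x'. 0 < i \<and> Suc i < length c \<and> d = c[i := x'] \<and>
     lam (c ! (i - 1)) (c ! i) < lam (c ! i) (c ! Suc i) \<and>
     pcover P le (c ! (i - 1)) x' \<and> pcover P le x' (c ! Suc i) \<and>
     lam (c ! (i - 1)) x' = lam (c ! i) (c ! Suc i) \<and>
     lam x' (c ! Suc i) = lam (c ! (i - 1)) (c ! i))"

definition chain_equiv :: "'a set \<Rightarrow> ('a \<Rightarrow> 'a \<Rightarrow> bool) \<Rightarrow> 'a \<Rightarrow> ('a \<Rightarrow> 'a \<Rightarrow> 'l::linorder)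
    \<Rightarrow> ('a list \<times> 'a list) set" where
  "chain_equiv P le z0 lam =
     {(c, d). c \<in> sat_chains P le z0 \<and> d \<in> sat_chains P le z0 \<and>
              (quad_exch P le lam c d \<or> quad_exch P le lam d c)}\<^sup>*"

definition Q_carrier :: "'a set \<Rightarrow> ('a \<Rightarrow> 'a \<Rightarrow> bool) \<Rightarrow> 'a \<Rightarrow> ('a \<Rightarrow> 'a \<Rightarrow> 'l::linorder)
    \<Rightarrow> 'a list set set" where
  "Q_carrier P le z0 lam = (\<lambda>c. chain_equiv P le z0 lam `` {c}) ` sat_chains P le z0"

text \<open>Order on classes: transitive closure of "some chain of X is contained in
  (= is a prefix of, for saturated chains from bottom) some chain of Y".\<close>
definition Q_le :: "'a set \<Rightarrow> ('a \<Rightarrow> 'a \<Rightarrow> bool) \<Rightarrow> 'a \<Rightarrow> ('a \<Rightarrow> 'a \<Rightarrow> 'l::linorder)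
    \<Rightarrow> 'a list set \<Rightarrow> 'a list set \<Rightarrow> bool" where
  "Q_le P le z0 lam X Y \<longleftrightarrow>
     (X, Y) \<in> {(X, Y). X \<in> Q_carrier P le z0 lam \<and> Y \<in> Q_carrier P le z0 lam \<and>
                     (\<exists>c\<in>X. \<exists>d\<in>Y. prefix c d)}\<^sup>+"

definition order_iso :: "'a set \<Rightarrow> ('a \<Rightarrow> 'a \<Rightarrow> bool) \<Rightarrow> 'b set \<Rightarrow> ('b \<Rightarrow> 'b \<Rightarrow> bool) \<Rightarrow> bool" where
  "order_iso A leA B leB \<longleftrightarrow>
     (\<exists>f. bij_betw f A B \<and> (\<forall>x\<in>A. \<forall>y\<in>A. leA x y \<longleftrightarrow> leB (f x) (f y)))"

definition noncrossing :: "nat set set \<Rightarrow> bool" where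
  "noncrossing \<pi> \<longleftrightarrow> \<not> (\<exists>a b c d. a < b \<and> b < c \<and> c < d \<and>
     (\<exists>B\<in>\<pi>. \<exists>B'\<in>\<pi>. B \<noteq> B' \<and> a \<in> B \<and> c \<in> B \<and> b \<in> B' \<and> d \<in> B'))"

definition NC :: "nat \<Rightarrow> nat set set set" where
  "NC n = {\<pi>. partition_on {1..n} \<pi> \<and> noncrossing \<pi>}"

definition refines :: "nat set set \<Rightarrow> nat set set \<Rightarrow> bool" where
  "refines \<pi> \<sigma> \<longleftrightarrow> (\<forall>B\<in>\<pi>. \<exists>C\<in>\<sigma>. B \<subseteq> C)"

definition NC_bot :: "nat \<Rightarrow> nat set set" where
  "NC_bot n = (\<lambda>i. {i}) ` {1..n}"

definition lamNC :: "nat set set \<Rightarrow> nat set set \<Rightarrow> nat" where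
  "lamNC \<pi> \<sigma> = (THE a. \<exists>Bi\<in>\<pi>. \<exists>Bj\<in>\<pi>. Bi \<notin> \<sigma> \<and> Bj \<notin> \<sigma> \<and> Bi \<noteq> Bj \<and>
       Min Bi < Min Bj \<and> a = Max {x\<in>Bi. x < Min Bj})"

text \<open>A labeled Dyck path on B is e : B -> N; we represent it by a function on nat
  that is 0 outside B.  For B = {b1 < ... < bj}: sum of e = j - 1 and
  e(b1)+...+e(bi) >= i for i <= j-1.\<close>
definition dyck :: "nat set \<Rightarrow> (nat \<Rightarrow> nat) \<Rightarrow> bool" where
  "dyck B e \<longleftrightarrow> finite B \<and> B \<noteq> {} \<and> (\<forall>x. x \<notin> B \<longrightarrow> e x = 0) \<and>
     (\<Sum>b\<in>B. e b) = card B - 1 \<and>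
     (\<forall>b\<in>B. b \<noteq> Max B \<longrightarrow> card {c\<in>B. c \<le> b} \<le> (\<Sum>c\<in>{c\<in>B. c \<le> b}. e c))"

definition NCDyck :: "nat \<Rightarrow> (nat set \<times> (nat \<Rightarrow> nat)) set set" where
  "NCDyck n = {F. (\<forall>(B, e)\<in>F. dyck B e) \<and> inj_on fst F \<and> fst ` F \<in> NC n}"

definition mergeable :: "nat set \<Rightarrow> nat set \<Rightarrow> bool" where
  "mergeable B C \<longleftrightarrow> B \<inter> C = {} \<and> Min B < Min C \<and> (\<forall>b\<in>B. b < Min C \<or> Max C < b)"

definition dyck_merge :: "nat set \<Rightarrow> (nat \<Rightarrow> nat) \<Rightarrow> nat set \<Rightarrow> (nat \<Rightarrow> nat)
    \<Rightarrow> nat set \<times> (nat \<Rightarrow> nat)" where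
  "dyck_merge B e C f = (B \<union> C, \<lambda>x. if x \<in> C then f x
       else if x = Max {b\<in>B. b < Min C} then e x + 1 else e x)"

definition merge_step :: "nat \<Rightarrow> (nat set \<times> (nat \<Rightarrow> nat)) set \<Rightarrow> (nat set \<times> (nat \<Rightarrow> nat)) set \<Rightarrow> bool" where
  "merge_step n F F' \<longleftrightarrow> F \<in> NCDyck n \<and> F' \<in> NCDyck n \<and>
     (\<exists>B e C f. (B, e) \<in> F \<and> (C, f) \<in> F \<and> (B, e) \<noteq> (C, f) \<and> mergeable B C \<and>
        F' = insert (dyck_merge B e C f) (F - {(B, e), (C, f)}))"

definition NCDyck_le :: "nat \<Rightarrow> (nat set \<times> (nat \<Rightarrow> nat)) set \<Rightarrow> (nat set \<times> (nat \<Rightarrow> nat)) set \<Rightarrow> bool" where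
  "NCDyck_le n F F' \<longleftrightarrow> (F, F') \<in> {(F, F'). merge_step n F F'}\<^sup>*"

end

theory Submission
  imports Defs "HOL-Library.Multiset"
begin

text \<open>A saturated chain from the bottom of \<open>NC n\<close> is a sequence of merges of two blocks, and
  the label of a merge is an element of the block with the smaller minimum. Recording, for each
  block of the last partition, how often each of its elements occurs as a label turns a chain into
  a noncrossing collection of labeled Dyck paths, and appending a merge to a chain is exactly
  merging two of these paths. Quadratic exchanges only permute labels, so the map is constant on
  classes. It separates classes: by rank two switching every chain is equivalent to one with
  weakly decreasing labels, and such a chain is determined by its collection, since its last
  label is the smallest one, the block merged last is the first return of the merged path after
  that label, and the rest follows by induction. It is onto: splitting off the element that follows
  the last up-step of a path gives a collection with one more path, from which the original arises
  by a single merge. Prefixes of chains correspond to sequences of merges, so the map is an order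
  isomorphism.\<close>

section \<open>Merging blocks of partitions\<close>

definition merge_blocks :: "nat set set \<Rightarrow> nat set \<Rightarrow> nat set \<Rightarrow> nat set set" where
  "merge_blocks \<pi> A B = insert (A \<union> B) (\<pi> - {A, B})"

lemma partition_on_block_eq:
  assumes "partition_on S \<pi>" "P \<in> \<pi>" "Q \<in> \<pi>" "x \<in> P" "x \<in> Q"
  shows "P = Q"
  using assms unfolding partition_on_def disjoint_def by blast

lemma partition_on_disjoint:
  "partition_on S \<pi> \<Longrightarrow> A \<in> \<pi> \<Longrightarrow> B \<in> \<pi> \<Longrightarrow> A \<noteq> B \<Longrightarrow> A \<inter> B = {}"
  using partition_on_block_eq[of S \<pi> A B] by blast

lemma partition_on_block_nonempty: "partition_on S \<pi> \<Longrightarrow> P \<in> \<pi> \<Longrightarrow> P \<noteq> {}"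
  unfolding partition_on_def by auto

lemma partition_on_block_subset: "partition_on S \<pi> \<Longrightarrow> P \<in> \<pi> \<Longrightarrow> P \<subseteq> S"
  unfolding partition_on_def by auto

lemma partition_on_block_exists: "partition_on S \<pi> \<Longrightarrow> x \<in> S \<Longrightarrow> \<exists>P\<in>\<pi>. x \<in> P"
  unfolding partition_on_def by auto

lemma partition_on_subset_eq:
  assumes "partition_on S \<pi>" "partition_on S \<tau>" "\<tau> \<subseteq> \<pi>"
  shows "\<tau> = \<pi>"
proof -
  have "P \<in> \<tau>" if P: "P \<in> \<pi>" for P
  proof -
    obtain x where "x \<in> P" using partition_on_block_nonempty[OF assms(1) P] by blast
    then obtain Q where "Q \<in> \<tau>" "x \<in> Q"
      using partition_on_block_exists[OF assms(2)] partition_on_block_subset[OF assms(1) P] by blast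
    then show ?thesis using partition_on_block_eq[OF assms(1) P] assms(3) \<open>x \<in> P\<close> by blast
  qed
  then show ?thesis using assms by blast
qed

lemma partition_on_union_notin:
  assumes "partition_on S \<pi>" "A \<in> \<pi>" "B \<in> \<pi>" "A \<noteq> B"
  shows "A \<union> B \<notin> \<pi>"
proof
  assume h: "A \<union> B \<in> \<pi>"
  obtain a b where "a \<in> A" "b \<in> B" using partition_on_block_nonempty assms by blast
  then have "A \<union> B = A" "A \<union> B = B" using partition_on_block_eq[OF assms(1) h] assms(2,3) by blast+
  then show False using assms(4) by blast
qed

lemma partition_on_subblock_notin:
  assumes "partition_on X \<pi>" "S \<in> \<pi>" "T \<subseteq> S" "T \<noteq> {}" "T \<noteq> S"
  shows "T \<notin> \<pi>"
proof
  assume T: "T \<in> \<pi>"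
  obtain t where "t \<in> T" using assms(4) by blast
  then have "T = S" using partition_on_block_eq[OF assms(1) T assms(2)] assms(3) by blast
  then show False using assms(5) by simp
qed

lemma card_partition_on_le:
  assumes "partition_on {1..n} \<pi>"
  shows "card \<pi> \<le> n"
proof -
  have Min_in_block: "Min P \<in> P" if "P \<in> \<pi>" for P
    using partition_on_block_subset[OF assms that] partition_on_block_nonempty[OF assms that]
    by (meson Min_in finite_atLeastAtMost finite_subset)
  have "inj_on Min \<pi>"
  proof (rule inj_onI)
    fix P Q assume "P \<in> \<pi>" "Q \<in> \<pi>" "Min P = Min Q"
    then show "P = Q" using Min_in_block partition_on_block_eq[OF assms] by metis
  qed
  moreover have "Min ` \<pi> \<subseteq> {1..n}"
    using Min_in_block partition_on_block_subset[OF assms] by blast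
  ultimately show ?thesis using card_inj_on_le[of Min \<pi> "{1..n}"] by simp
qed

lemma partition_on_remove_block:
  assumes "partition_on X \<pi>" "S \<in> \<pi>"
  shows "partition_on (X - S) (\<pi> - {S})"
proof -
  have "disjnt S (\<Union> (\<pi> - {S}))"
    using partition_on_disjoint[OF assms(1) _ assms(2)] unfolding disjnt_def by blast
  then show ?thesis using partition_on_insert[of S "\<pi> - {S}" X] assms by (simp add: insert_absorb)
qed

lemma partition_on_split_block:
  assumes p: "partition_on X \<pi>" and S: "S \<in> \<pi>" "b \<in> S" "S \<noteq> {b}"
  shows "partition_on X (insert (S - {b}) (insert {b} (\<pi> - {S})))"
proof -
  have SX: "S \<subseteq> X" using partition_on_block_subset[OF p S(1)] .
  have dj: "T \<inter> S = {}" if "T \<in> \<pi> - {S}" for T using partition_on_disjoint[OF p _ S(1)] that by blast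
  have db: "disjnt {b} (\<Union> (\<pi> - {S}))" using dj S(2) unfolding disjnt_def by blast
  have dSb: "disjnt (S - {b}) (\<Union> (insert {b} (\<pi> - {S})))" using dj unfolding disjnt_def by blast
  have eq: "X - (S - {b}) - {b} = X - S" using S(2) by blast
  have "partition_on (X - (S - {b})) (insert {b} (\<pi> - {S}))"
    unfolding partition_on_insert[OF db] eq using partition_on_remove_block[OF p S(1)] S(2) SX by blast
  then show ?thesis unfolding partition_on_insert[OF dSb] using S SX by blast
qed

lemma merge_blocks_union_in: "A \<union> B \<in> merge_blocks \<pi> A B"
  unfolding merge_blocks_def by auto

lemma merge_blocks_other_in: "P \<in> \<pi> \<Longrightarrow> P \<noteq> A \<Longrightarrow> P \<noteq> B \<Longrightarrow> P \<in> merge_blocks \<pi> A B"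
  unfolding merge_blocks_def by auto

lemma merge_blocks_cases:
  "T \<in> merge_blocks \<pi> A B \<Longrightarrow> T = A \<union> B \<or> (T \<in> \<pi> \<and> T \<noteq> A \<and> T \<noteq> B)"
  unfolding merge_blocks_def by auto

lemma merge_blocks_commute: "merge_blocks \<pi> A B = merge_blocks \<pi> B A"
  unfolding merge_blocks_def by (simp add: Un_commute insert_commute)

lemma refines_merge_blocks: "refines \<pi> (merge_blocks \<pi> A B)"
  unfolding refines_def merge_blocks_def by auto

lemma partition_on_merge_blocks:
  assumes "partition_on S \<pi>" "A \<in> \<pi>" "B \<in> \<pi>" "A \<noteq> B"
  shows "partition_on S (merge_blocks \<pi> A B)"
proof (rule partition_onI)
  show "\<Union> (merge_blocks \<pi> A B) = S"
    using assms partition_onD1[OF assms(1)] unfolding merge_blocks_def by auto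
  show "{} \<notin> merge_blocks \<pi> A B"
    using assms partition_on_block_nonempty[OF assms(1)] unfolding merge_blocks_def by auto
  fix p q assume "p \<in> merge_blocks \<pi> A B" "q \<in> merge_blocks \<pi> A B" "p \<noteq> q"
  then show "disjnt p q"
    using assms partition_on_block_eq[OF assms(1)] unfolding merge_blocks_def disjnt_def by auto
qed

lemma merge_blocks_notin:
  assumes "partition_on S \<pi>" "A \<in> \<pi>" "B \<in> \<pi>" "A \<noteq> B"
  shows "A \<notin> merge_blocks \<pi> A B" "B \<notin> merge_blocks \<pi> A B"
  using merge_blocks_cases[of A \<pi> A B] merge_blocks_cases[of B \<pi> A B]
    partition_on_disjoint[OF assms] partition_on_block_nonempty[OF assms(1)] assms(2,3) by blast+

lemma unmerge_blocks:
  assumes "A \<union> B \<notin> \<pi>" "A \<in> \<pi>" "B \<in> \<pi>"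
  shows "insert A (insert B (merge_blocks \<pi> A B - {A \<union> B})) = \<pi>"
  using assms unfolding merge_blocks_def by auto

lemma refines_block_subset:
  assumes "partition_on S \<tau>" "refines \<pi> \<tau>" "P \<in> \<pi>" "T \<in> \<tau>" "x \<in> P" "x \<in> T"
  shows "P \<subseteq> T"
proof -
  obtain T' where "T' \<in> \<tau>" "P \<subseteq> T'" using assms(2,3) unfolding refines_def by blast
  then show ?thesis using partition_on_block_eq[OF assms(1) \<open>T' \<in> \<tau>\<close> assms(4)] assms(5,6) by blast
qed

section \<open>Covers in the lattice of noncrossing partitions\<close>

lemma NC_partition_on: "\<pi> \<in> NC n \<Longrightarrow> partition_on {1..n} \<pi>"
  unfolding NC_def by auto

lemma NC_noncrossing: "\<pi> \<in> NC n \<Longrightarrow> noncrossing \<pi>"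
  unfolding NC_def by auto

lemma NC_block_finite: "\<pi> \<in> NC n \<Longrightarrow> P \<in> \<pi> \<Longrightarrow> finite P"
  using partition_on_block_subset[OF NC_partition_on] by (meson finite_atLeastAtMost finite_subset)

lemma NC_finite: "\<pi> \<in> NC n \<Longrightarrow> finite \<pi>"
  using finite_elements[OF _ NC_partition_on] by blast

lemma NC_bot_in_NC: "NC_bot n \<in> NC n"
proof -
  have "partition_on {1..n} (NC_bot n)" unfolding NC_bot_def by (rule partition_on_singletons)
  moreover have "noncrossing (NC_bot n)" unfolding noncrossing_def NC_bot_def by auto
  ultimately show ?thesis unfolding NC_def by blast
qed

lemma noncrossingD:
  assumes "noncrossing \<pi>" "P \<in> \<pi>" "Q \<in> \<pi>" "P \<noteq> Q" "a < b" "b < c" "c < d"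
    "a \<in> P" "c \<in> P" "b \<in> Q" "d \<in> Q"
  shows False
  using assms unfolding noncrossing_def by blast

lemma NC_Min_neq:
  assumes "\<pi> \<in> NC n" "A \<in> \<pi>" "B \<in> \<pi>" "A \<noteq> B"
  shows "Min A \<noteq> Min B"
proof
  note p = NC_partition_on[OF assms(1)]
  assume "Min A = Min B"
  moreover have "Min A \<in> A" "Min B \<in> B"
    using Min_in NC_block_finite[OF assms(1)] partition_on_block_nonempty[OF p] assms by auto
  ultimately show False using partition_on_disjoint[OF p assms(2-4)] by auto
qed

lemma refines_block_of:
  assumes "partition_on S \<pi>" "partition_on S \<sigma>" "refines \<pi> \<sigma>" "C \<in> \<sigma>" "z \<in> C"
  obtains P where "P \<in> \<pi>" "z \<in> P" "P \<subseteq> C"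
proof -
  obtain P where "P \<in> \<pi>" "z \<in> P"
    using partition_on_block_exists[OF assms(1)] partition_on_block_subset[OF assms(2,4)] assms(5) by blast
  then show ?thesis using that refines_block_subset[OF assms(2,3) _ assms(4) _ assms(5)] by blast
qed

lemma block_between_merge_blocks:
  assumes p: "partition_on S \<pi>" and pt: "partition_on S \<tau>" and AB: "A \<in> \<pi>" "B \<in> \<pi>"
    and r1: "refines \<pi> \<tau>" and r2: "refines \<tau> (merge_blocks \<pi> A B)" and T: "T \<in> \<tau>"
  shows "T \<in> \<pi> \<or> T = A \<union> B"
proof -
  obtain S' where S': "S' \<in> merge_blocks \<pi> A B" "T \<subseteq> S'" using r2 T unfolding refines_def by blast
  obtain t where t: "t \<in> T" using partition_on_block_nonempty[OF pt T] by blast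
  from merge_blocks_cases[OF S'(1)] show ?thesis
  proof
    assume "S' \<in> \<pi> \<and> S' \<noteq> A \<and> S' \<noteq> B"
    moreover obtain P where "P \<in> \<pi>" "t \<in> P" "P \<subseteq> T" using refines_block_of[OF p pt r1 T t] .
    ultimately have "P = S'" using partition_on_block_eq[OF p] S'(2) t by blast
    then show ?thesis using \<open>P \<subseteq> T\<close> S'(2) \<open>P \<in> \<pi>\<close> by auto
  next
    assume SAB: "S' = A \<union> B"
    have AT: "A \<subseteq> T" if "x \<in> T" "x \<in> A" for x
      using refines_block_of[OF p pt r1 T that(1)] partition_on_block_eq[OF p _ AB(1)] that(2) by blast
    have BT: "B \<subseteq> T" if "x \<in> T" "x \<in> B" for x
      using refines_block_of[OF p pt r1 T that(1)] partition_on_block_eq[OF p _ AB(2)] that(2) by blast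
    have TAB: "T \<subseteq> A \<union> B" using S'(2) SAB by simp
    consider "T \<inter> A = {}" | "T \<inter> B = {}" | "A \<subseteq> T" "B \<subseteq> T" using AT BT by blast
    then show ?thesis
    proof cases
      case 1 then have "T = B" using TAB BT t by blast
      then show ?thesis using AB(2) by simp
    next
      case 2 then have "T = A" using TAB AT t by blast
      then show ?thesis using AB(1) by simp
    next
      case 3 then show ?thesis using TAB by blast
    qed
  qed
qed

lemma refines_between_merge_blocks:
  assumes p: "partition_on S \<pi>" and pt: "partition_on S \<tau>" and AB: "A \<in> \<pi>" "B \<in> \<pi>" "A \<noteq> B"
    and r1: "refines \<pi> \<tau>" and r2: "refines \<tau> (merge_blocks \<pi> A B)"
  shows "\<tau> = \<pi> \<or> \<tau> = merge_blocks \<pi> A B"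
proof (cases "A \<union> B \<in> \<tau>")
  case True
  have "T \<noteq> A \<and> T \<noteq> B" if T: "T \<in> \<tau>" "T \<noteq> A \<union> B" for T
  proof -
    obtain a b where "a \<in> A" "b \<in> B" using partition_on_block_nonempty[OF p] AB by blast
    then show ?thesis using partition_on_block_eq[OF pt T(1) True] T(2) by blast
  qed
  then have "\<tau> \<subseteq> merge_blocks \<pi> A B"
    using block_between_merge_blocks[OF p pt AB(1,2) r1 r2] merge_blocks_union_in merge_blocks_other_in
    by (metis subsetI)
  then show ?thesis using partition_on_subset_eq[OF partition_on_merge_blocks[OF p AB] pt] by blast
next
  case False
  then show ?thesis using block_between_merge_blocks[OF p pt AB(1,2) r1 r2] partition_on_subset_eq[OF p pt] by blast
qed

lemma pcover_merge_blocks: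
  assumes \<pi>: "\<pi> \<in> NC n" and AB: "A \<in> \<pi>" "B \<in> \<pi>" "A \<noteq> B" and \<sigma>: "merge_blocks \<pi> A B \<in> NC n"
  shows "pcover (NC n) refines \<pi> (merge_blocks \<pi> A B)"
proof -
  note p = NC_partition_on[OF \<pi>]
  have "\<pi> \<noteq> merge_blocks \<pi> A B"
    using partition_on_union_notin[OF p AB] merge_blocks_union_in by metis
  moreover have "\<tau> = \<pi> \<or> \<tau> = merge_blocks \<pi> A B"
    if "\<tau> \<in> NC n" "refines \<pi> \<tau>" "refines \<tau> (merge_blocks \<pi> A B)" for \<tau>
    using refines_between_merge_blocks[OF p NC_partition_on[OF that(1)] AB that(2,3)] .
  ultimately show ?thesis using \<pi> \<sigma> refines_merge_blocks unfolding pcover_def by blast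
qed

definition crossing :: "nat set \<Rightarrow> nat set \<Rightarrow> bool" where
  "crossing U V \<longleftrightarrow> (\<exists>a b c d. a < b \<and> b < c \<and> c < d \<and> a \<in> U \<and> c \<in> U \<and> b \<in> V \<and> d \<in> V)"

lemma separated_not_crossing:
  assumes "noncrossing \<rho>" "R1 \<in> \<rho>" "R2 \<in> \<rho>" "R1 \<noteq> R2" "U \<subseteq> R1" "V \<subseteq> R2"
  shows "\<not> crossing U V \<and> \<not> crossing V U"
proof -
  have "\<not> crossing U V"
    using noncrossingD[OF assms(1-4)] assms(5,6) unfolding crossing_def by blast
  moreover have "\<not> crossing V U"
    using noncrossingD[OF assms(1,3,2) assms(4)[symmetric]] assms(5,6) unfolding crossing_def by blast
  ultimately show ?thesis ..
qed

lemma interval_not_crossing: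
  fixes l M :: nat
  assumes "\<forall>u\<in>U. l < u \<and> u \<le> M" "\<forall>v\<in>V. v \<le> l \<or> M < v"
  shows "\<not> crossing U V" "\<not> crossing V U"
  using assms unfolding crossing_def by (meson le_less_trans less_trans not_le)+

lemma merge_blocks_NC:
  assumes \<pi>: "\<pi> \<in> NC n" and PQ: "P \<in> \<pi>" "Q \<in> \<pi>" "P \<noteq> Q"
    and sep: "\<And>E. E \<in> \<pi> \<Longrightarrow> E \<noteq> P \<Longrightarrow> E \<noteq> Q \<Longrightarrow> \<not> crossing (P \<union> Q) E \<and> \<not> crossing E (P \<union> Q)"
  shows "merge_blocks \<pi> P Q \<in> NC n"
proof -
  have "noncrossing (merge_blocks \<pi> P Q)"
    unfolding noncrossing_def
  proof clarify
    fix a b c d X Y assume h: "a < b" "b < c" "c < d" "X \<in> merge_blocks \<pi> P Q" "Y \<in> merge_blocks \<pi> P Q"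
      "X \<noteq> Y" "a \<in> X" "c \<in> X" "b \<in> Y" "d \<in> Y"
    then have cr: "crossing X Y" unfolding crossing_def by blast
    from merge_blocks_cases[OF h(4)] merge_blocks_cases[OF h(5)] show False
    proof (elim disjE)
      assume "X \<in> \<pi> \<and> X \<noteq> P \<and> X \<noteq> Q" "Y \<in> \<pi> \<and> Y \<noteq> P \<and> Y \<noteq> Q"
      then show False using noncrossingD[OF NC_noncrossing[OF \<pi>], of X Y a b c d] h by blast
    qed (use h(6) sep cr in blast)+
  qed
  then show ?thesis using partition_on_merge_blocks[OF NC_partition_on[OF \<pi>] PQ] unfolding NC_def by blast
qed

text \<open>Merging two blocks \<open>P \<ni> x\<close> and \<open>Q \<ni> y\<close> cannot create a crossing with a block \<open>E\<close> that
  avoids the open interval between \<open>x\<close> and \<open>y\<close>: a crossing would use one element of each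
  of \<open>P\<close> and \<open>Q\<close>, and the noncrossing of \<open>P\<close>, \<open>Q\<close> with \<open>E\<close> pins an element of \<open>E\<close> between
  \<open>x\<close> and \<open>y\<close>.\<close>

lemma gap_merge_not_crossing_outer:
  assumes nc: "noncrossing \<pi>" and PQE: "P \<in> \<pi>" "Q \<in> \<pi>" "E \<in> \<pi>" "P \<noteq> Q" "P \<noteq> E" "Q \<noteq> E"
    and dj: "P \<inter> E = {}" "Q \<inter> E = {}"
    and xy: "x \<in> P" "y \<in> Q" "x < y" "\<forall>z\<in>E. \<not> (x < z \<and> z < y)"
  shows "\<not> crossing (P \<union> Q) E"
proof
  assume "crossing (P \<union> Q) E"
  then obtain a b c d where abcd: "a < b" "b < c" "c < d" and h: "a \<in> P \<union> Q" "c \<in> P \<union> Q"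
    and b: "b \<in> E" and d: "d \<in> E" unfolding crossing_def by blast
  note cr = noncrossingD[OF nc]
  consider "a \<in> P" "c \<in> P" | "a \<in> Q" "c \<in> Q" | "a \<in> P" "c \<in> Q" | "a \<in> Q" "c \<in> P" using h by blast
  then show False
  proof cases
    case 1 then show ?thesis using cr[OF PQE(1) PQE(3) PQE(5)] abcd b d by blast
  next
    case 2 then show ?thesis using cr[OF PQE(2) PQE(3) PQE(6)] abcd b d by blast
  next
    case 3
    have "\<not> y < b" using cr[OF PQE(2) PQE(3) PQE(6), of y b c d] 3 abcd b d xy by blast
    moreover have "\<not> d < y" using cr[OF PQE(3) PQE(2) PQE(6)[symmetric], of b c d y] 3 abcd b d xy by blast
    moreover have "y \<noteq> b" "y \<noteq> d" using dj b d xy by auto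
    ultimately have yy: "b < y" "y < d" by auto
    have "\<not> (b < x \<and> x < d)" using cr[OF PQE(1) PQE(3) PQE(5), of a b x d] 3 abcd b d xy by blast
    moreover have "x \<noteq> b" using dj b xy by auto
    ultimately have "x < b" using yy xy by linarith
    then show ?thesis using xy(4) b yy by blast
  next
    case 4
    have "\<not> x < b" using cr[OF PQE(1) PQE(3) PQE(5), of x b c d] 4 abcd b d xy by blast
    moreover have "\<not> d < x" using cr[OF PQE(3) PQE(1) PQE(5)[symmetric], of b c d x] 4 abcd b d xy by blast
    moreover have "x \<noteq> b" "x \<noteq> d" using dj b d xy by auto
    ultimately have xx: "b < x" "x < d" by auto
    have "\<not> (b < y \<and> y < d)" using cr[OF PQE(2) PQE(3) PQE(6), of a b y d] 4 abcd b d xy by blast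
    moreover have "y \<noteq> d" using dj d xy by auto
    ultimately have "d < y" using xx xy by linarith
    then show ?thesis using xy(4) d xx by blast
  qed
qed

lemma gap_merge_not_crossing_inner:
  assumes nc: "noncrossing \<pi>" and PQE: "P \<in> \<pi>" "Q \<in> \<pi>" "E \<in> \<pi>" "P \<noteq> Q" "P \<noteq> E" "Q \<noteq> E"
    and dj: "P \<inter> E = {}" "Q \<inter> E = {}"
    and xy: "x \<in> P" "y \<in> Q" "x < y" "\<forall>z\<in>E. \<not> (x < z \<and> z < y)"
  shows "\<not> crossing E (P \<union> Q)"
proof
  assume "crossing E (P \<union> Q)"
  then obtain a b c d where abcd: "a < b" "b < c" "c < d" and h: "b \<in> P \<union> Q" "d \<in> P \<union> Q"
    and a: "a \<in> E" and c: "c \<in> E" unfolding crossing_def by blast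
  note cr = noncrossingD[OF nc]
  consider "b \<in> P" "d \<in> P" | "b \<in> Q" "d \<in> Q" | "b \<in> P" "d \<in> Q" | "b \<in> Q" "d \<in> P" using h by blast
  then show False
  proof cases
    case 1 then show ?thesis using cr[OF PQE(3) PQE(1) PQE(5)[symmetric]] abcd a c by blast
  next
    case 2 then show ?thesis using cr[OF PQE(3) PQE(2) PQE(6)[symmetric]] abcd a c by blast
  next
    case 3
    have "\<not> c < x" using cr[OF PQE(3) PQE(1) PQE(5)[symmetric], of a b c x] 3 abcd a c xy by blast
    moreover have "\<not> x < a" using cr[OF PQE(1) PQE(3) PQE(5), of x a b c] 3 abcd a c xy by blast
    moreover have "x \<noteq> a" "x \<noteq> c" using dj a c xy by auto
    ultimately have xx: "a < x" "x < c" by auto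
    have "\<not> (a < y \<and> y < c)" using cr[OF PQE(3) PQE(2) PQE(6)[symmetric], of a y c d] 3 abcd a c xy by blast
    moreover have "y \<noteq> c" using dj c xy by auto
    ultimately have "c < y" using xx xy by linarith
    then show ?thesis using xy(4) c xx by blast
  next
    case 4
    have "\<not> c < y" using cr[OF PQE(3) PQE(2) PQE(6)[symmetric], of a b c y] 4 abcd a c xy by blast
    moreover have "\<not> y < a" using cr[OF PQE(2) PQE(3) PQE(6), of y a b c] 4 abcd a c xy by blast
    moreover have "y \<noteq> a" "y \<noteq> c" using dj a c xy by auto
    ultimately have yy: "a < y" "y < c" by auto
    have "\<not> (a < x \<and> x < c)" using cr[OF PQE(3) PQE(1) PQE(5)[symmetric], of a x c d] 4 abcd a c xy by blast
    moreover have "x \<noteq> a" using dj a xy by auto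
    ultimately have "x < a" using yy xy by linarith
    then show ?thesis using xy(4) a yy by blast
  qed
qed

lemma closest_pair_in_block:
  assumes p: "partition_on S \<pi>" and ps: "partition_on S \<sigma>" and r: "refines \<pi> \<sigma>"
    and C: "C \<in> \<sigma>" "C \<notin> \<pi>"
  obtains P Q x y where "P \<in> \<pi>" "Q \<in> \<pi>" "P \<noteq> Q" "P \<subseteq> C" "Q \<subseteq> C" "x \<in> P" "y \<in> Q" "x < y"
    "\<forall>z\<in>C. \<not> (x < z \<and> z < y)"
proof -
  note block = refines_block_of[OF p ps r C(1)]
  define D where "D = {(x, y). x \<in> C \<and> y \<in> C \<and> x < y \<and> \<not> (\<exists>P\<in>\<pi>. x \<in> P \<and> y \<in> P)}"
  obtain t where t: "t \<in> C" using partition_on_block_nonempty[OF ps C(1)] by blast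
  obtain P where P: "P \<in> \<pi>" "t \<in> P" "P \<subseteq> C" by (rule block[OF t])
  moreover have "P \<noteq> C" using C(2) P(1) by blast
  ultimately obtain u where u: "u \<in> C" "u \<notin> P" by blast
  have "\<not> (\<exists>P'\<in>\<pi>. t \<in> P' \<and> u \<in> P')" using partition_on_block_eq[OF p _ P(1)] P(2) u(2) by blast
  moreover have "t \<noteq> u" using u P by blast
  ultimately have "(min t u, max t u) \<in> D" using t u unfolding D_def by (auto simp: min_def max_def)
  then obtain x y where xyD: "(x, y) \<in> D" and minD: "\<And>x' y'. (x', y') \<in> D \<Longrightarrow> y - x \<le> y' - x'"
    using ex_has_least_nat[of "\<lambda>p. p \<in> D" _ "\<lambda>(a, b). b - a"] by fastforce
  have xy: "x \<in> C" "y \<in> C" "x < y" "\<not> (\<exists>P\<in>\<pi>. x \<in> P \<and> y \<in> P)" using xyD unfolding D_def by auto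
  obtain P where P: "P \<in> \<pi>" "x \<in> P" "P \<subseteq> C" by (rule block[OF xy(1)])
  obtain Q where Q: "Q \<in> \<pi>" "y \<in> Q" "Q \<subseteq> C" by (rule block[OF xy(2)])
  have "\<not> (x < z \<and> z < y)" if z: "z \<in> C" for z
  proof
    assume h: "x < z \<and> z < y"
    obtain R where R: "R \<in> \<pi>" "z \<in> R" "R \<subseteq> C" by (rule block[OF z])
    show False
    proof (cases "R = P")
      case True
      then have "\<not> (\<exists>P'\<in>\<pi>. z \<in> P' \<and> y \<in> P')"
        using partition_on_block_eq[OF p] R P Q xy(4) by metis
      then have "(z, y) \<in> D" using z xy(2) h unfolding D_def by auto
      then show False using minD[of z y] h by linarith
    next
      case False
      then have "\<not> (\<exists>P'\<in>\<pi>. x \<in> P' \<and> z \<in> P')"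
        using partition_on_block_eq[OF p] R P by metis
      then have "(x, z) \<in> D" using z xy(1) h unfolding D_def by auto
      then show False using minD[of x z] h by linarith
    qed
  qed
  moreover have "P \<noteq> Q" using xy(4) P Q by blast
  ultimately show ?thesis using that P Q xy(3) by blast
qed

lemma merge_closest_pair_NC:
  assumes \<pi>: "\<pi> \<in> NC n" and \<sigma>: "\<sigma> \<in> NC n" and r: "refines \<pi> \<sigma>" and C: "C \<in> \<sigma>"
    and PQ: "P \<in> \<pi>" "Q \<in> \<pi>" "P \<noteq> Q" "P \<subseteq> C" "Q \<subseteq> C" "x \<in> P" "y \<in> Q" "x < y"
    and gap: "\<forall>z\<in>C. \<not> (x < z \<and> z < y)"
  shows "merge_blocks \<pi> P Q \<in> NC n"
proof (rule merge_blocks_NC[OF \<pi> PQ(1-3)])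
  note p = NC_partition_on[OF \<pi>] and ps = NC_partition_on[OF \<sigma>]
  fix E assume E: "E \<in> \<pi>" "E \<noteq> P" "E \<noteq> Q"
  obtain e where e: "e \<in> E" using partition_on_block_nonempty[OF p E(1)] by blast
  have "e \<in> {1..n}" using partition_on_block_subset[OF p E(1)] e by blast
  then obtain D where D: "D \<in> \<sigma>" "e \<in> D" using partition_on_block_exists[OF ps] by blast
  have ED: "E \<subseteq> D" using refines_block_subset[OF ps r E(1) D(1) e D(2)] .
  show "\<not> crossing (P \<union> Q) E \<and> \<not> crossing E (P \<union> Q)"
  proof (cases "D = C")
    case True
    have gapE: "\<forall>z\<in>E. \<not> (x < z \<and> z < y)" using gap ED True by blast
    have dj: "P \<inter> E = {}" "Q \<inter> E = {}"
      using partition_on_disjoint[OF p PQ(1) E(1)] partition_on_disjoint[OF p PQ(2) E(1)] E(2,3) by auto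
    note nc = NC_noncrossing[OF \<pi>] and ne = PQ(3) E(2)[symmetric] E(3)[symmetric]
    show ?thesis
      using gap_merge_not_crossing_outer[OF nc PQ(1,2) E(1) ne dj PQ(6-8) gapE]
        gap_merge_not_crossing_inner[OF nc PQ(1,2) E(1) ne dj PQ(6-8) gapE] by blast
  next
    case False
    have "P \<union> Q \<subseteq> C" using PQ(4,5) by blast
    then show ?thesis using separated_not_crossing[OF NC_noncrossing[OF \<sigma>] C(1) D(1) False[symmetric] _ ED] by blast
  qed
qed

lemma pcover_NC_merge_blocks:
  assumes "pcover (NC n) refines \<pi> \<sigma>"
  obtains A B where "A \<in> \<pi>" "B \<in> \<pi>" "A \<noteq> B" "\<sigma> = merge_blocks \<pi> A B"
proof -
  have \<pi>: "\<pi> \<in> NC n" and \<sigma>: "\<sigma> \<in> NC n" and r: "refines \<pi> \<sigma>" and ne: "\<pi> \<noteq> \<sigma>"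
    and btw: "\<And>\<tau>. \<tau> \<in> NC n \<Longrightarrow> refines \<pi> \<tau> \<Longrightarrow> refines \<tau> \<sigma> \<Longrightarrow> \<tau> = \<pi> \<or> \<tau> = \<sigma>"
    using assms unfolding pcover_def by auto
  note p = NC_partition_on[OF \<pi>] and ps = NC_partition_on[OF \<sigma>]
  have "\<not> \<sigma> \<subseteq> \<pi>" using partition_on_subset_eq[OF p ps] ne by blast
  then obtain C where C: "C \<in> \<sigma>" "C \<notin> \<pi>" by blast
  obtain P Q x y where PQ: "P \<in> \<pi>" "Q \<in> \<pi>" "P \<noteq> Q" "P \<subseteq> C" "Q \<subseteq> C" "x \<in> P" "y \<in> Q" "x < y"
    and gap: "\<forall>z\<in>C. \<not> (x < z \<and> z < y)"
    using closest_pair_in_block[OF p ps r C] by blast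
  have \<tau>: "merge_blocks \<pi> P Q \<in> NC n" using merge_closest_pair_NC[OF \<pi> \<sigma> r C(1) PQ gap] .
  have "refines (merge_blocks \<pi> P Q) \<sigma>"
    unfolding refines_def
  proof
    fix T assume "T \<in> merge_blocks \<pi> P Q"
    from merge_blocks_cases[OF this] show "\<exists>C'\<in>\<sigma>. T \<subseteq> C'"
    proof
      assume "T = P \<union> Q" then show ?thesis using C(1) PQ(4,5) by blast
    next
      assume "T \<in> \<pi> \<and> T \<noteq> P \<and> T \<noteq> Q" then show ?thesis using r unfolding refines_def by blast
    qed
  qed
  moreover have "merge_blocks \<pi> P Q \<noteq> \<pi>"
    using partition_on_union_notin[OF p PQ(1-3)] merge_blocks_union_in[of P Q \<pi>] by blast
  ultimately have "\<sigma> = merge_blocks \<pi> P Q" using btw[OF \<tau> refines_merge_blocks] by blast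
  then show ?thesis using that PQ(1-3) by blast
qed

lemma lamNC_merge_blocks:
  assumes p: "partition_on S \<pi>" and AB: "A \<in> \<pi>" "B \<in> \<pi>" "A \<noteq> B" and m: "Min A < Min B"
  shows "lamNC \<pi> (merge_blocks \<pi> A B) = Max {x\<in>A. x < Min B}"
proof -
  let ?\<sigma> = "merge_blocks \<pi> A B"
  have nA: "A \<notin> ?\<sigma>" and nB: "B \<notin> ?\<sigma>" using merge_blocks_notin[OF p AB] by auto
  have onlyAB: "X = A \<or> X = B" if "X \<in> \<pi>" "X \<notin> ?\<sigma>" for X using merge_blocks_other_in[of X \<pi> A B] that by blast
  show ?thesis unfolding lamNC_def
  proof (rule the_equality)
    show "\<exists>Bi\<in>\<pi>. \<exists>Bj\<in>\<pi>. Bi \<notin> ?\<sigma> \<and> Bj \<notin> ?\<sigma> \<and> Bi \<noteq> Bj \<and> Min Bi < Min Bj \<and>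
        Max {x\<in>A. x < Min B} = Max {x\<in>Bi. x < Min Bj}" using AB nA nB m by blast
  next
    fix a assume "\<exists>Bi\<in>\<pi>. \<exists>Bj\<in>\<pi>. Bi \<notin> ?\<sigma> \<and> Bj \<notin> ?\<sigma> \<and> Bi \<noteq> Bj \<and> Min Bi < Min Bj \<and>
        a = Max {x\<in>Bi. x < Min Bj}"
    then obtain Bi Bj where h: "Bi \<in> \<pi>" "Bj \<in> \<pi>" "Bi \<notin> ?\<sigma>" "Bj \<notin> ?\<sigma>" "Bi \<noteq> Bj" "Min Bi < Min Bj"
      "a = Max {x\<in>Bi. x < Min Bj}" by blast
    have "Bi = A \<and> Bj = B" using onlyAB[OF h(1,3)] onlyAB[OF h(2,4)] h(5,6) m by auto
    then show "a = Max {x\<in>A. x < Min B}" using h(7) by simp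
  qed
qed

lemma Max_below_Min:
  assumes "finite A" "A \<noteq> {}" "Min A < Min B"
  shows "Max {x\<in>A. x < Min B} \<in> A" "Max {x\<in>A. x < Min B} < Min B"
proof -
  have "Min A \<in> {x\<in>A. x < Min B}" using Min_in[OF assms(1,2)] assms(3) by simp
  then have ne: "{x\<in>A. x < Min B} \<noteq> {}" by blast
  have f: "finite {x\<in>A. x < Min B}" using assms(1) by simp
  show "Max {x\<in>A. x < Min B} \<in> A" "Max {x\<in>A. x < Min B} < Min B" using Max_in[OF f ne] by auto
qed

lemma mergeable_NC:
  assumes \<pi>: "\<pi> \<in> NC n" and AB: "A \<in> \<pi>" "B \<in> \<pi>" "A \<noteq> B" and m: "Min A < Min B"
  shows "mergeable A B"
proof -
  have p: "partition_on {1..n} \<pi>" using NC_partition_on[OF \<pi>] .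
  have fA: "finite A" "A \<noteq> {}" and fB: "finite B" "B \<noteq> {}"
    using NC_block_finite[OF \<pi>] partition_on_block_nonempty[OF p] AB by auto
  have dj: "A \<inter> B = {}" using partition_on_disjoint[OF p AB] .
  have "b < Min B \<or> Max B < b" if b: "b \<in> A" for b
  proof (rule ccontr)
    assume "\<not> (b < Min B \<or> Max B < b)"
    then have "Min B \<le> b" "b \<le> Max B" by auto
    moreover have "b \<noteq> Min B" "b \<noteq> Max B" using dj b Min_in[OF fB] Max_in[OF fB] by auto
    ultimately have "Min B < b" "b < Max B" by auto
    then show False using noncrossingD[OF NC_noncrossing[OF \<pi>] AB(1) AB(2) AB(3) m] Min_in[OF fA] Min_in[OF fB] Max_in[OF fB] b
      by blast
  qed
  then show ?thesis unfolding mergeable_def using dj m by blast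
qed

lemma pcover_NC_merge_blocks_ordered:
  assumes "pcover (NC n) refines \<pi> \<sigma>"
  obtains A B where "A \<in> \<pi>" "B \<in> \<pi>" "A \<noteq> B" "Min A < Min B" "\<sigma> = merge_blocks \<pi> A B"
proof -
  obtain A B where AB: "A \<in> \<pi>" "B \<in> \<pi>" "A \<noteq> B" "\<sigma> = merge_blocks \<pi> A B"
    using pcover_NC_merge_blocks[OF assms] by blast
  have "\<pi> \<in> NC n" using assms unfolding pcover_def by auto
  then consider "Min A < Min B" | "Min B < Min A" using NC_Min_neq[OF _ AB(1-3)] by fastforce
  then show ?thesis using that AB merge_blocks_commute by metis
qed

section \<open>Labeled Dyck paths\<close>

definition elems_le :: "nat set \<Rightarrow> nat \<Rightarrow> nat set" where
  "elems_le B t = {c\<in>B. c \<le> t}"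

lemma dyck_iff_elems_le:
  "dyck B e \<longleftrightarrow> finite B \<and> B \<noteq> {} \<and> (\<forall>x. x \<notin> B \<longrightarrow> e x = 0) \<and>
     (\<Sum>b\<in>B. e b) = card B - 1 \<and> (\<forall>t. t < Max B \<longrightarrow> card (elems_le B t) \<le> (\<Sum>c\<in>elems_le B t. e c))"
proof
  assume d: "dyck B e"
  have fin: "finite B" and ne: "B \<noteq> {}" using d unfolding dyck_def by auto
  have "card (elems_le B t) \<le> (\<Sum>c\<in>elems_le B t. e c)" if t: "t < Max B" for t
  proof (cases "elems_le B t = {}")
    case True then show ?thesis by simp
  next
    case False
    have fd: "finite (elems_le B t)" using fin unfolding elems_le_def by auto
    define b where "b = Max (elems_le B t)"
    have bin: "b \<in> elems_le B t" using Max_in[OF fd False] unfolding b_def .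
    then have "b \<in> B" "b \<le> t" unfolding elems_le_def by auto
    then have "b \<noteq> Max B" using t by simp
    moreover have "{c\<in>B. c \<le> b} = elems_le B t" using Max_ge[OF fd] \<open>b \<le> t\<close> unfolding b_def elems_le_def by fastforce
    ultimately show ?thesis using d \<open>b \<in> B\<close> unfolding dyck_def by auto
  qed
  then show "finite B \<and> B \<noteq> {} \<and> (\<forall>x. x \<notin> B \<longrightarrow> e x = 0) \<and>
     (\<Sum>b\<in>B. e b) = card B - 1 \<and> (\<forall>t. t < Max B \<longrightarrow> card (elems_le B t) \<le> (\<Sum>c\<in>elems_le B t. e c))"
    using d unfolding dyck_def by auto
next
  assume h: "finite B \<and> B \<noteq> {} \<and> (\<forall>x. x \<notin> B \<longrightarrow> e x = 0) \<and>
     (\<Sum>b\<in>B. e b) = card B - 1 \<and> (\<forall>t. t < Max B \<longrightarrow> card (elems_le B t) \<le> (\<Sum>c\<in>elems_le B t. e c))"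
  have "b < Max B" if "b \<in> B" "b \<noteq> Max B" for b using that h Max_ge[of B b] by fastforce
  then show "dyck B e" using h unfolding dyck_def elems_le_def by auto
qed

lemma dyck_elems_le_Suc:
  assumes "dyck A e"
  shows "card (elems_le A t) \<le> (\<Sum>c\<in>elems_le A t. e c) + 1"
proof (cases "t < Max A")
  case True then show ?thesis using assms unfolding dyck_iff_elems_le by fastforce
next
  case False
  have fin: "finite A" and ne: "A \<noteq> {}" using assms unfolding dyck_def by auto
  have "\<forall>c\<in>A. c \<le> t" using False Max_ge[OF fin] by (meson le_trans not_less)
  then have "elems_le A t = A" unfolding elems_le_def by auto
  then show ?thesis using assms unfolding dyck_def by simp
qed

lemma sum_bump:
  fixes l :: nat and e :: "nat \<Rightarrow> nat"
  assumes "finite S"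
  shows "(\<Sum>x\<in>S. (if x = l then e x + 1 else e x)) = (\<Sum>x\<in>S. e x) + (if l \<in> S then 1 else 0)"
proof -
  have "(\<Sum>x\<in>S. (if x = l then e x + 1 else e x)) = (\<Sum>x\<in>S. e x + (if x = l then 1 else 0))"
    by (rule sum.cong) auto
  also have "\<dots> = (\<Sum>x\<in>S. e x) + (\<Sum>x\<in>S. (if x = l then 1 else 0))" by (simp add: sum.distrib)
  also have "(\<Sum>x\<in>S. (if x = (l::nat) then 1 else 0::nat)) = (if l \<in> S then 1 else 0)"
    using assms by (simp add: sum.delta)
  finally show ?thesis .
qed

lemma elems_le_merge:
  fixes e f :: "nat \<Rightarrow> nat"
  assumes fin: "finite A" "finite B" and dj: "A \<inter> B = {}" and l: "l \<in> A"
  shows "card (elems_le (A \<union> B) t) = card (elems_le A t) + card (elems_le B t)"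
    and "(\<Sum>x\<in>elems_le (A \<union> B) t. if x \<in> B then f x else if x = l then e x + 1 else e x) =
      (\<Sum>x\<in>elems_le A t. e x) + (if l \<le> t then 1 else 0) + (\<Sum>x\<in>elems_le B t. f x)"
proof -
  have union: "elems_le (A \<union> B) t = elems_le A t \<union> elems_le B t" unfolding elems_le_def by auto
  have f1: "finite (elems_le A t)" "finite (elems_le B t)" using fin unfolding elems_le_def by auto
  have dj': "elems_le A t \<inter> elems_le B t = {}" using dj unfolding elems_le_def by auto
  show "card (elems_le (A \<union> B) t) = card (elems_le A t) + card (elems_le B t)"
    unfolding union using card_Un_disjoint[OF f1 dj'] .
  have "(\<Sum>x\<in>elems_le A t. if x \<in> B then f x else if x = l then e x + 1 else e x) =
      (\<Sum>x\<in>elems_le A t. if x = l then e x + 1 else e x)"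
    using dj by (intro sum.cong) (auto simp: elems_le_def)
  moreover have "(\<Sum>x\<in>elems_le B t. if x \<in> B then f x else if x = l then e x + 1 else e x) =
      (\<Sum>x\<in>elems_le B t. f x)"
    by (intro sum.cong) (auto simp: elems_le_def)
  moreover have "l \<in> elems_le A t \<longleftrightarrow> l \<le> t" using l unfolding elems_le_def by simp
  ultimately show "(\<Sum>x\<in>elems_le (A \<union> B) t. if x \<in> B then f x else if x = l then e x + 1 else e x) =
      (\<Sum>x\<in>elems_le A t. e x) + (if l \<le> t then 1 else 0) + (\<Sum>x\<in>elems_le B t. f x)"
    unfolding union sum.union_disjoint[OF f1 dj'] using sum_bump[OF f1(1), of l e] by simp
qed

lemma dyck_merge_dyck:
  assumes dA: "dyck A e" and dB: "dyck B f" and dj: "A \<inter> B = {}"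
    and l: "l \<in> A" "\<forall>b\<in>B. l < b"
  shows "dyck (A \<union> B) (\<lambda>x. if x \<in> B then f x else if x = l then e x + 1 else e x)"
    (is "dyck _ ?g")
proof -
  have finA: "finite A" and neA: "A \<noteq> {}" and zA: "\<forall>x. x \<notin> A \<longrightarrow> e x = 0"
    and sA: "(\<Sum>b\<in>A. e b) = card A - 1" using dA unfolding dyck_def by auto
  have finB: "finite B" and neB: "B \<noteq> {}" and zB: "\<forall>x. x \<notin> B \<longrightarrow> f x = 0"
    and sB: "(\<Sum>b\<in>B. f b) = card B - 1" using dB unfolding dyck_def by auto
  have cA: "card A \<ge> 1" and cB: "card B \<ge> 1" using finA neA finB neB by (auto simp: Suc_le_eq card_gt_0_iff)
  note card_le = elems_le_merge(1)[OF finA finB dj l(1)]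
    and sum_le = elems_le_merge(2)[OF finA finB dj l(1), of f e]
  have fin: "finite (A \<union> B)" using finA finB by simp
  have MAB: "Max (A \<union> B) = max (Max A) (Max B)" using finA finB neA neB by (simp add: Max_Un)
  have all: "elems_le X t = X" if "finite X" "X \<noteq> {}" "Max X \<le> t" for X t
    using Max_ge[OF that(1)] that(3) unfolding elems_le_def by (blast intro: le_trans)
  have "(\<Sum>x\<in>A \<union> B. ?g x) = (\<Sum>x\<in>A. e x) + 1 + (\<Sum>x\<in>B. f x)"
    using sum_le[of "Max (A \<union> B)"] all[OF fin] all[OF finA neA] all[OF finB neB] Max_ge[OF fin] l(1) MAB
    by (simp add: neA)
  then have tot: "(\<Sum>x\<in>A \<union> B. ?g x) = card (A \<union> B) - 1"
    using sA sB cA cB card_Un_disjoint[OF finA finB dj] by simp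
  have pre: "card (elems_le (A \<union> B) t) \<le> (\<Sum>c\<in>elems_le (A \<union> B) t. ?g c)" if t: "t < Max (A \<union> B)" for t
  proof (cases "t < l")
    case True
    have "elems_le B t = {}" using l True unfolding elems_le_def by fastforce
    moreover have "t < Max A" using True Max_ge[OF finA l(1)] by simp
    then have "card (elems_le A t) \<le> (\<Sum>c\<in>elems_le A t. e c)" using dA unfolding dyck_iff_elems_le by blast
    ultimately show ?thesis using card_le sum_le True by simp
  next
    case False
    have GA: "card (elems_le A t) \<le> (\<Sum>c\<in>elems_le A t. e c) + 1" using dyck_elems_le_Suc[OF dA] .
    show ?thesis
    proof (cases "t < Max B")
      case True
      then have "card (elems_le B t) \<le> (\<Sum>c\<in>elems_le B t. f c)" using dB unfolding dyck_iff_elems_le by blast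
      then show ?thesis using GA False card_le sum_le by simp
    next
      case False
      then have "elems_le B t = B" using all[OF finB neB] by simp
      moreover have "t < Max A" using t False MAB by auto
      then have "card (elems_le A t) \<le> (\<Sum>c\<in>elems_le A t. e c)" using dA unfolding dyck_iff_elems_le by blast
      moreover have "card B = (\<Sum>c\<in>B. f c) + 1" using sB cB by simp
      ultimately show ?thesis using \<open>\<not> t < l\<close> card_le sum_le by simp
    qed
  qed
  have "\<forall>x. x \<notin> A \<union> B \<longrightarrow> ?g x = 0" using zA zB l by auto
  then show ?thesis unfolding dyck_iff_elems_le using fin neA tot pre by blast
qed

text \<open>The elements after \<open>a\<close> up to the first point at which the path, restarted after \<open>a\<close>,
  returns to the diagonal.\<close>

definition first_return :: "nat set \<Rightarrow> (nat \<Rightarrow> nat) \<Rightarrow> nat \<Rightarrow> nat set" where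
  "first_return S e a = {x\<in>S. a < x \<and> x \<le> (LEAST r. r \<in> S \<and> a < r \<and>
      card {x\<in>S. a < x \<and> x \<le> r} = (\<Sum>x\<in>{x\<in>S. a < x \<and> x \<le> r}. e x) + 1)}"

lemma first_return_merge:
  assumes dB: "dyck B f" and fin: "finite A" and dj: "A \<inter> B = {}" and a: "a \<in> A" "\<forall>b\<in>B. a < b"
    and gapA: "\<forall>x\<in>A. x \<le> a \<or> (\<forall>b\<in>B. b < x)" and ef: "\<forall>x\<in>B. e x = f x"
  shows "first_return (A \<union> B) e a = B"
proof -
  have finB: "finite B" and neB: "B \<noteq> {}" and sB: "(\<Sum>b\<in>B. f b) = card B - 1"
    using dB unfolding dyck_def by auto
  have cB: "card B \<ge> 1" using finB neB by (simp add: Suc_le_eq card_gt_0_iff)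
  have MB: "Max B \<in> B" using Max_in[OF finB neB] .
  let ?P = "\<lambda>r. r \<in> A \<union> B \<and> a < r \<and>
      card {x\<in>A \<union> B. a < x \<and> x \<le> r} = (\<Sum>x\<in>{x\<in>A \<union> B. a < x \<and> x \<le> r}. e x) + 1"
  have window: "{x\<in>A \<union> B. a < x \<and> x \<le> r} = elems_le B r" if r: "r \<le> Max B" for r
  proof (intro set_eqI iffI)
    fix x assume x: "x \<in> {x\<in>A \<union> B. a < x \<and> x \<le> r}"
    have "x \<notin> A"
    proof
      assume "x \<in> A" then have "Max B < x" using gapA x MB by force
      then show False using x r by simp
    qed
    then show "x \<in> elems_le B r" using x unfolding elems_le_def by auto
  qed (use a(2) in \<open>auto simp: elems_le_def\<close>)
  have sum_eq: "(\<Sum>x\<in>elems_le B r. e x) = (\<Sum>x\<in>elems_le B r. f x)" for r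
    using ef by (intro sum.cong) (auto simp: elems_le_def)
  have "elems_le B (Max B) = B" using Max_ge[OF finB] unfolding elems_le_def by auto
  then have PM: "?P (Max B)" using window[OF order_refl] sum_eq[of "Max B"] MB a(2) sB cB by auto
  have least: "Max B \<le> r" if r: "?P r" for r
  proof (rule ccontr)
    assume "\<not> Max B \<le> r"
    then have "r < Max B" by simp
    then have "card (elems_le B r) \<le> (\<Sum>x\<in>elems_le B r. f x)" using dB unfolding dyck_iff_elems_le by blast
    then show False using r window[of r] sum_eq[of r] \<open>\<not> Max B \<le> r\<close> by simp
  qed
  have "(LEAST r. ?P r) = Max B" using Least_equality[of ?P "Max B"] PM least by blast
  then show ?thesis unfolding first_return_def using window[OF order_refl] \<open>elems_le B (Max B) = B\<close> by simp
qed

lemma dyck_last_up_step: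
  assumes d: "dyck S e" and c2: "card S \<ge> 2"
  obtains a b where "a \<in> S" "b \<in> S" "a < b" "\<forall>z\<in>S. \<not> (a < z \<and> z < b)" "1 \<le> e a"
    "\<forall>x\<in>S. a < x \<longrightarrow> e x = 0"
proof -
  have fin: "finite S" and ne: "S \<noteq> {}"
    and sS: "(\<Sum>b\<in>S. e b) = card S - 1" and pre: "\<forall>t. t < Max S \<longrightarrow> card (elems_le S t) \<le> (\<Sum>c\<in>elems_le S t. e c)"
    using d unfolding dyck_iff_elems_le by auto
  have MS: "Max S \<in> S" and mS: "Min S \<in> S" using Max_in[OF fin ne] Min_in[OF fin ne] by auto
  have mlt: "Min S < Max S"
  proof -
    have "\<not> card S \<le> Suc 0" using c2 by simp
    then obtain x y where "x \<in> S" "y \<in> S" "x \<noteq> y" using card_le_Suc0_iff_eq[OF fin] by blast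
    moreover have "Min S \<le> x" "x \<le> Max S" "Min S \<le> y" "y \<le> Max S"
      using Min_le[OF fin] Max_ge[OF fin] calculation by auto
    ultimately show ?thesis by arith
  qed
  have "elems_le S (Min S) = {Min S}" using Min_le[OF fin] mS unfolding elems_le_def by fastforce
  then have em: "1 \<le> e (Min S)" using pre mlt by fastforce
  define T where "T = {x\<in>S. 1 \<le> e x}"
  have finT: "finite T" "T \<noteq> {}" using fin mS em unfolding T_def by auto
  define a where "a = Max T"
  have aS: "a \<in> S" and ea: "1 \<le> e a" using Max_in[OF finT] unfolding a_def T_def by auto
  have above: "\<forall>x\<in>S. a < x \<longrightarrow> e x = 0"
    using Max_ge[OF finT(1)] unfolding a_def T_def by fastforce
  have "e (Max S) = 0"
  proof -
    have "elems_le S (Max S - 1) = S - {Max S}" using Max_ge[OF fin] mlt unfolding elems_le_def by fastforce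
    then have "card (S - {Max S}) \<le> (\<Sum>c\<in>S - {Max S}. e c)" using pre mlt by (metis diff_less zero_less_one
        le_less_trans zero_le)
    moreover have "(\<Sum>c\<in>S - {Max S}. e c) = (\<Sum>c\<in>S. e c) - e (Max S)"
      using sum_diff1_nat[of e S "Max S"] MS by simp
    moreover have "e (Max S) \<le> sum e S" by (rule member_le_sum) (use MS fin in auto)
    ultimately show ?thesis using sS c2 MS fin by simp
  qed
  then have aM: "a < Max S" using Max_ge[OF fin aS] ea by (cases "a = Max S") auto
  define U where "U = {z\<in>S. a < z}"
  have finU: "finite U" "U \<noteq> {}" using fin MS aM unfolding U_def by auto
  have "Min U \<in> S" "a < Min U" using Min_in[OF finU] unfolding U_def by auto
  moreover have "\<forall>z\<in>S. \<not> (a < z \<and> z < Min U)" using Min_le[OF finU(1)] unfolding U_def by fastforce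
  ultimately show ?thesis using that aS ea above by blast
qed

lemma dyck_remove_after_last_up_step:
  assumes d: "dyck S e" and ab: "a \<in> S" "b \<in> S" "a < b" and ea: "1 \<le> e a"
    and above: "\<forall>x\<in>S. a < x \<longrightarrow> e x = 0"
  shows "dyck (S - {b}) (e(a := e a - 1))"
proof -
  have fin: "finite S" and z: "\<forall>x. x \<notin> S \<longrightarrow> e x = 0"
    and sS: "(\<Sum>b\<in>S. e b) = card S - 1" and pre: "\<forall>t. t < Max S \<longrightarrow> card (elems_le S t) \<le> (\<Sum>c\<in>elems_le S t. e c)"
    using d unfolding dyck_iff_elems_le by auto
  have eb: "e b = 0" using above ab by blast
  have aM: "a < Max S" using Max_ge[OF fin ab(2)] ab(3) by simp
  define e' where "e' = e(a := e a - 1)"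
  let ?S = "S - {b}"
  have fin': "finite ?S" using fin by simp
  have ne': "?S \<noteq> {}" using ab by auto
  have aS': "a \<in> ?S" using ab by auto
  have z': "\<forall>x. x \<notin> ?S \<longrightarrow> e' x = 0" using z eb ab unfolding e'_def by auto
  have remove_a: "(\<Sum>x\<in>X. e' x) = (\<Sum>x\<in>X. e x) - 1" if "finite X" "a \<in> X" for X
  proof -
    have "(\<Sum>x\<in>X - {a}. e' x) = (\<Sum>x\<in>X - {a}. e x)" unfolding e'_def by (intro sum.cong) auto
    then show ?thesis using sum.remove[OF that, of e'] sum.remove[OF that, of e] ea unfolding e'_def by simp
  qed
  have sumSb: "(\<Sum>x\<in>?S. e x) = (\<Sum>x\<in>S. e x)" using sum_diff1_nat[of e S b] ab(2) eb by simp
  have cardS': "card ?S = card S - 1" using ab(2) fin by simp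
  have tot': "(\<Sum>x\<in>?S. e' x) = card ?S - 1" using remove_a[OF fin' aS'] sumSb sS cardS' by simp
  have pre': "card (elems_le ?S t) \<le> (\<Sum>c\<in>elems_le ?S t. e' c)" if t: "t < Max ?S" for t
  proof (cases "t < a")
    case True
    have "elems_le ?S t = elems_le S t" using True ab unfolding elems_le_def by auto
    moreover have "(\<Sum>c\<in>elems_le S t. e' c) = (\<Sum>c\<in>elems_le S t. e c)"
      using True unfolding e'_def elems_le_def by (intro sum.cong) auto
    ultimately show ?thesis using pre True aM by simp
  next
    case False
    have sub: "elems_le ?S t \<subseteq> ?S" by (auto simp: elems_le_def)
    have ad: "a \<in> elems_le ?S t" using False aS' unfolding elems_le_def by auto
    have "(\<Sum>c\<in>?S - elems_le ?S t. e c) = 0"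
      using above False by (intro sum.neutral) (auto simp: elems_le_def)
    then have "(\<Sum>c\<in>elems_le ?S t. e c) = (\<Sum>c\<in>?S. e c)"
      using sum.subset_diff[OF sub fin', of e] by simp
    moreover have "card (elems_le ?S t) \<le> card (?S - {Max ?S})"
      using t fin' by (intro card_mono) (auto simp: elems_le_def)
    moreover have "card (?S - {Max ?S}) = card S - 2" using Max_in[OF fin' ne'] cardS' fin' by simp
    ultimately show ?thesis using remove_a[OF finite_subset[OF sub fin'] ad] sumSb sS by simp
  qed
  show ?thesis unfolding dyck_iff_elems_le e'_def[symmetric] using fin' ne' z' tot' pre' by blast
qed

section \<open>Chains and their collections of Dyck paths\<close>

lemma sat_chains_snoc:
  assumes "c \<in> sat_chains P le z" "pcover P le (last c) \<sigma>"
  shows "c @ [\<sigma>] \<in> sat_chains P le z"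
proof -
  have c: "c \<noteq> []" "hd c = z" "set c \<subseteq> P" "\<And>i. Suc i < length c \<Longrightarrow> pcover P le (c ! i) (c ! Suc i)"
    using assms(1) unfolding sat_chains_def by auto
  have "\<sigma> \<in> P" using assms(2) unfolding pcover_def by auto
  moreover have "pcover P le ((c @ [\<sigma>]) ! i) ((c @ [\<sigma>]) ! Suc i)" if "Suc i < length (c @ [\<sigma>])" for i
  proof (cases "Suc i < length c")
    case True then show ?thesis using c(4) by (simp add: nth_append)
  next
    case False
    then have i: "Suc i = length c" using that by simp
    then have "i = length c - 1" by simp
    then show ?thesis using assms(2) c(1) i by (simp add: nth_append last_conv_nth)
  qed
  ultimately show ?thesis using c unfolding sat_chains_def by auto
qed

lemma sat_chains_butlast:
  assumes "c \<in> sat_chains P le z" "length c \<ge> 2"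
  shows "butlast c \<in> sat_chains P le z" "pcover P le (last (butlast c)) (last c)" "c = butlast c @ [last c]"
proof -
  have c: "c \<noteq> []" "hd c = z" "set c \<subseteq> P" "\<And>i. Suc i < length c \<Longrightarrow> pcover P le (c ! i) (c ! Suc i)"
    using assms(1) unfolding sat_chains_def by auto
  show e: "c = butlast c @ [last c]" using c(1) by simp
  obtain m where m: "length c = Suc (Suc m)" using assms(2) by (metis add_2_eq_Suc le_Suc_ex)
  have bl: "length (butlast c) = Suc m" using m by simp
  then have bl: "butlast c \<noteq> []" "length (butlast c) = Suc m" by (metis Zero_not_Suc list.size(3))+
  show "butlast c \<in> sat_chains P le z"
    unfolding sat_chains_def
  proof (intro CollectI conjI allI impI)
    show "butlast c \<noteq> []" using bl by simp
    show "hd (butlast c) = z" using c(2) bl by (metis e hd_append2)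
    show "set (butlast c) \<subseteq> P" using c(3) by (meson in_set_butlastD subset_iff)
    fix i assume "Suc i < length (butlast c)"
    then show "pcover P le (butlast c ! i) (butlast c ! Suc i)" using c(4)[of i] bl m by (simp add: nth_butlast)
  qed
  show "pcover P le (last (butlast c)) (last c)"
    using c(4)[of m] m bl c(1) by (simp add: last_conv_nth nth_butlast)
qed

lemma sat_chains_single: "[x] \<in> sat_chains P le z \<longleftrightarrow> x = z \<and> x \<in> P"
  unfolding sat_chains_def by auto

abbreviation NC_chains :: "nat \<Rightarrow> nat set set list set" where
  "NC_chains n \<equiv> sat_chains (NC n) refines (NC_bot n)"

definition labels :: "nat set set list \<Rightarrow> nat list" where
  "labels c = map (\<lambda>i. lamNC (c ! i) (c ! Suc i)) [0..<length c - 1]"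

definition label_count :: "nat set set list \<Rightarrow> nat \<Rightarrow> nat" where
  "label_count c x = count (mset (labels c)) x"

definition block_path :: "nat set set list \<Rightarrow> nat set \<Rightarrow> nat \<Rightarrow> nat" where
  "block_path c B = (\<lambda>x. if x \<in> B then label_count c x else 0)"

definition dyck_collection :: "nat set set list \<Rightarrow> (nat set \<times> (nat \<Rightarrow> nat)) set" where
  "dyck_collection c = (\<lambda>B. (B, block_path c B)) ` last c"

lemma labels_snoc: "c \<noteq> [] \<Longrightarrow> labels (c @ [\<sigma>]) = labels c @ [lamNC (last c) \<sigma>]"
proof -
  assume c: "c \<noteq> []"
  then obtain m where m: "length c = Suc m" by (cases c) auto
  have "[0..<length (c @ [\<sigma>]) - 1] = [0..<m] @ [m]" using m by simp
  moreover have "map (\<lambda>i. lamNC ((c @ [\<sigma>]) ! i) ((c @ [\<sigma>]) ! Suc i)) [0..<m] =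
      map (\<lambda>i. lamNC (c ! i) (c ! Suc i)) [0..<m]" using m by (intro map_cong) (auto simp: nth_append)
  moreover have "(c @ [\<sigma>]) ! m = last c" "(c @ [\<sigma>]) ! Suc m = \<sigma>" using m c
    by (auto simp: nth_append last_conv_nth)
  ultimately show ?thesis unfolding labels_def using m by simp
qed

lemma label_count_snoc: "c \<noteq> [] \<Longrightarrow> label_count (c @ [\<sigma>]) x = label_count c x + (if x = lamNC (last c) \<sigma> then 1 else 0)"
  unfolding label_count_def by (simp add: labels_snoc)

lemma dyck_collection_snoc:
  assumes c: "c \<noteq> []" and p: "partition_on S (last c)" and AB: "A \<in> last c" "B \<in> last c" "A \<noteq> B"
    and m: "Min A < Min B" and fA: "finite A"
  shows "dyck_collection (c @ [merge_blocks (last c) A B]) = insert (dyck_merge A (block_path c A) B (block_path c B)) (dyck_collection c - {(A, block_path c A), (B, block_path c B)})"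
proof -
  let ?\<pi> = "last c" let ?\<sigma> = "merge_blocks ?\<pi> A B" let ?l = "Max {x\<in>A. x < Min B}"
  have neA: "A \<noteq> {}" using partition_on_block_nonempty[OF p AB(1)] .
  have l: "?l \<in> A" "?l < Min B" using Max_below_Min[OF fA neA m] by auto
  have dj: "A \<inter> B = {}" using partition_on_disjoint[OF p AB] .
  have lam: "lamNC ?\<pi> ?\<sigma> = ?l" using lamNC_merge_blocks[OF p AB m] .
  have label_count': "label_count (c @ [?\<sigma>]) x = label_count c x + (if x = ?l then 1 else 0)" for x using label_count_snoc[OF c] lam by simp
  have dyE: "block_path (c @ [?\<sigma>]) E = block_path c E" if "E \<in> ?\<pi>" "E \<noteq> A" for E
  proof -
    have "?l \<notin> E" using partition_on_disjoint[OF p that(1) AB(1) that(2)] l(1) by blast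
    then show ?thesis unfolding block_path_def using label_count' by auto
  qed
  have dyU: "(A \<union> B, block_path (c @ [?\<sigma>]) (A \<union> B)) = dyck_merge A (block_path c A) B (block_path c B)"
    unfolding dyck_merge_def block_path_def using label_count' dj l by (auto intro!: ext)
  have "dyck_collection (c @ [?\<sigma>]) = (\<lambda>E. (E, block_path (c @ [?\<sigma>]) E)) ` ?\<sigma>" unfolding dyck_collection_def by simp
  also have "\<dots> = insert (A \<union> B, block_path (c @ [?\<sigma>]) (A \<union> B)) ((\<lambda>E. (E, block_path (c @ [?\<sigma>]) E)) ` (?\<pi> - {A, B}))"
    unfolding merge_blocks_def by simp
  also have "(\<lambda>E. (E, block_path (c @ [?\<sigma>]) E)) ` (?\<pi> - {A, B}) = (\<lambda>E. (E, block_path c E)) ` (?\<pi> - {A, B})"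
    using dyE by (intro image_cong) auto
  also have "\<dots> = dyck_collection c - {(A, block_path c A), (B, block_path c B)}" unfolding dyck_collection_def by auto
  finally show ?thesis using dyU by simp
qed

lemma NC_chains_snoc_merge:
  assumes "c \<in> NC_chains n" "length c \<ge> 2"
  obtains c0 A B where "c0 \<in> NC_chains n" "c = c0 @ [merge_blocks (last c0) A B]" "A \<in> last c0" "B \<in> last c0"
    "A \<noteq> B" "Min A < Min B" "last c0 \<in> NC n" "merge_blocks (last c0) A B \<in> NC n"
proof -
  have c0: "butlast c \<in> NC_chains n" and cov: "pcover (NC n) refines (last (butlast c)) (last c)"
    and ce: "c = butlast c @ [last c]" using sat_chains_butlast[OF assms] by auto
  obtain A B where "A \<in> last (butlast c)" "B \<in> last (butlast c)" "A \<noteq> B" "Min A < Min B"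
    "last c = merge_blocks (last (butlast c)) A B"
    using pcover_NC_merge_blocks_ordered[OF cov] by blast
  moreover have "last (butlast c) \<in> NC n" "last c \<in> NC n" using cov unfolding pcover_def by auto
  ultimately show ?thesis using that c0 ce by metis
qed

lemma label_count_single: "label_count [x] y = 0" unfolding label_count_def labels_def by simp

lemma dyck_single: "dyck {i} (\<lambda>x. 0)" unfolding dyck_def by simp

lemma dyck_collection_single: "dyck_collection [x] = (\<lambda>B. (B, \<lambda>y. 0)) ` x"
  unfolding dyck_collection_def block_path_def label_count_single by simp

lemma NC_chains_last: "c \<in> NC_chains n \<Longrightarrow> last c \<in> NC n"
  unfolding sat_chains_def by auto

lemma labels_NC_chains:
  assumes "c \<in> NC_chains n"
  shows "set (labels c) \<subseteq> {1..n}"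
proof
  fix x assume "x \<in> set (labels c)"
  then obtain j where j: "Suc j < length c" "x = lamNC (c ! j) (c ! Suc j)"
    unfolding labels_def by (auto simp: less_diff_conv)
  then have cov: "pcover (NC n) refines (c ! j) (c ! Suc j)" using assms unfolding sat_chains_def by blast
  then obtain A B where AB: "A \<in> c ! j" "B \<in> c ! j" "A \<noteq> B" "Min A < Min B"
    "c ! Suc j = merge_blocks (c ! j) A B"
    using pcover_NC_merge_blocks_ordered by blast
  have \<pi>: "c ! j \<in> NC n" using cov unfolding pcover_def by blast
  note p = NC_partition_on[OF \<pi>]
  have "x = Max {x\<in>A. x < Min B}" using j(2) AB lamNC_merge_blocks[OF p AB(1-4)] by simp
  then have "x \<in> A"
    using Max_below_Min(1)[OF NC_block_finite[OF \<pi> AB(1)] partition_on_block_nonempty[OF p AB(1)] AB(4)] by simp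
  then show "x \<in> {1..n}" using partition_on_block_subset[OF p AB(1)] by blast
qed

lemma dyck_collection_dyck:
  assumes "c \<in> NC_chains n"
  shows "\<forall>(B, g)\<in>dyck_collection c. dyck B g"
  using assms
proof (induction "length c" arbitrary: c rule: less_induct)
  case less
  show ?case
  proof (cases "length c \<ge> 2")
    case False
    have "c \<noteq> []" using less.prems unfolding sat_chains_def by blast
    then have "length c = 1" using False by (simp add: not_le less_2_cases_iff)
    then obtain x where c: "c = [x]" by (metis One_nat_def length_0_conv length_Suc_conv)
    then have "x = NC_bot n" using less.prems by (simp add: sat_chains_single)
    then show ?thesis unfolding c dyck_collection_single NC_bot_def using dyck_single by auto
  next
    case True
    obtain c0 A B where d: "c0 \<in> NC_chains n" "c = c0 @ [merge_blocks (last c0) A B]" "A \<in> last c0"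
      "B \<in> last c0" "A \<noteq> B" "Min A < Min B" "last c0 \<in> NC n"
      using NC_chains_snoc_merge[OF less.prems True] by blast
    have IH: "\<forall>(B, g)\<in>dyck_collection c0. dyck B g" using less.hyps[OF _ d(1)] d(2) by simp
    have c0ne: "c0 \<noteq> []" using d(1) unfolding sat_chains_def by auto
    note p = NC_partition_on[OF d(7)]
    have fA: "finite A" "A \<noteq> {}" using NC_block_finite[OF d(7) d(3)] partition_on_block_nonempty[OF p d(3)] .
    have fB: "finite B" using NC_block_finite[OF d(7) d(4)] .
    have dA: "dyck A (block_path c0 A)" and dB: "dyck B (block_path c0 B)"
      using IH d(3,4) unfolding dyck_collection_def by auto
    have l: "Max {x\<in>A. x < Min B} \<in> A" "\<forall>b\<in>B. Max {x\<in>A. x < Min B} < b"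
      using Max_below_Min[OF fA d(6)] Min_le[OF fB] by fastforce+
    have "dyck (fst (dyck_merge A (block_path c0 A) B (block_path c0 B)))
        (snd (dyck_merge A (block_path c0 A) B (block_path c0 B)))"
      unfolding dyck_merge_def using dyck_merge_dyck[OF dA dB partition_on_disjoint[OF p d(3-5)] l] by simp
    then show ?thesis using IH dyck_collection_snoc[OF c0ne p d(3-6) fA(1)] d(2) by auto
  qed
qed

lemma dyck_collection_NCDyck:
  assumes "c \<in> NC_chains n"
  shows "dyck_collection c \<in> NCDyck n"
proof -
  have "inj_on fst (dyck_collection c)" unfolding dyck_collection_def by (auto simp: inj_on_def)
  moreover have "fst ` dyck_collection c = last c" unfolding dyck_collection_def by force
  ultimately show ?thesis
    using NC_chains_last[OF assms] dyck_collection_dyck[OF assms] unfolding NCDyck_def by auto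
qed

lemma fst_dyck_collection: "fst ` dyck_collection c = last c" unfolding dyck_collection_def by force

lemma label_count_outside:
  assumes "c \<in> NC_chains n" "x \<notin> {1..n}"
  shows "label_count c x = 0"
  using labels_NC_chains[OF assms(1)] assms(2) unfolding label_count_def by (auto simp: count_eq_zero_iff)

lemma dyck_collection_eqD:
  assumes c: "c \<in> NC_chains n" and d: "d \<in> NC_chains n" and e: "dyck_collection c = dyck_collection d"
  shows "last c = last d" "label_count c = label_count d"
proof -
  show l: "last c = last d" using fst_dyck_collection[of c] fst_dyck_collection[of d] e by simp
  have p: "partition_on {1..n} (last c)" using NC_partition_on[OF NC_chains_last[OF c]] .
  show "label_count c = label_count d"
  proof
    fix x
    show "label_count c x = label_count d x"
    proof (cases "x \<in> {1..n}")
      case True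
      then obtain B where B: "B \<in> last c" "x \<in> B" using partition_on_block_exists[OF p] by blast
      then have "(B, block_path c B) \<in> dyck_collection d" using e unfolding dyck_collection_def by auto
      then have "block_path c B = block_path d B" unfolding dyck_collection_def by auto
      then show ?thesis using B(2) unfolding block_path_def by meson
    next
      case False then show ?thesis using label_count_outside c d by simp
    qed
  qed
qed

lemma merge_step_butlast:
  assumes "c \<in> NC_chains n" "length c \<ge> 2"
  shows "merge_step n (dyck_collection (butlast c)) (dyck_collection c)"
proof -
  obtain c0 A B where d: "c0 \<in> NC_chains n" "c = c0 @ [merge_blocks (last c0) A B]" "A \<in> last c0" "B \<in> last c0" "A \<noteq> B"
      "Min A < Min B" "last c0 \<in> NC n" "merge_blocks (last c0) A B \<in> NC n" using NC_chains_snoc_merge[OF assms] by blast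
  have c0ne: "c0 \<noteq> []" using d(1) unfolding sat_chains_def by auto
  have p: "partition_on {1..n} (last c0)" using NC_partition_on[OF d(7)] .
  have fA: "finite A" using NC_block_finite[OF d(7) d(3)] .
  have ph: "dyck_collection c = insert (dyck_merge A (block_path c0 A) B (block_path c0 B)) (dyck_collection c0 - {(A, block_path c0 A), (B, block_path c0 B)})"
    using dyck_collection_snoc[OF c0ne p d(3-6) fA] d(2) by simp
  have "butlast c = c0" using d(2) by simp
  moreover have "(A, block_path c0 A) \<in> dyck_collection c0" "(B, block_path c0 B) \<in> dyck_collection c0" using d(3,4) unfolding dyck_collection_def by auto
  moreover have "mergeable A B" using mergeable_NC[OF d(7) d(3-6)] .
  ultimately show ?thesis unfolding merge_step_def using dyck_collection_NCDyck[OF d(1)] dyck_collection_NCDyck[OF assms(1)] ph d(5) by blast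
qed

lemma NCDyck_le_prefix:
  assumes "c \<in> NC_chains n" "d \<in> NC_chains n" "prefix c d"
  shows "NCDyck_le n (dyck_collection c) (dyck_collection d)"
proof -
  obtain zs where d: "d = c @ zs" using assms(3) prefixE by blast
  have cne: "c \<noteq> []" using assms(1) unfolding sat_chains_def by auto
  have "c @ zs \<in> NC_chains n \<Longrightarrow> NCDyck_le n (dyck_collection c) (dyck_collection (c @ zs))"
  proof (induction zs rule: rev_induct)
    case Nil then show ?case unfolding NCDyck_le_def by simp
  next
    case (snoc z zs)
    have len: "length (c @ zs @ [z]) \<ge> 2" using cne by (cases c) auto
    have "butlast (c @ zs @ [z]) = c @ zs" by (simp add: butlast_append)
    then have b: "c @ zs \<in> NC_chains n" using sat_chains_butlast(1)[OF snoc.prems[simplified] len] by simp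
    have "merge_step n (dyck_collection (c @ zs)) (dyck_collection (c @ zs @ [z]))"
      using merge_step_butlast[OF snoc.prems[simplified] len] \<open>butlast _ = _\<close> by simp
    then show ?case using snoc.IH[OF b] unfolding NCDyck_le_def by (simp add: rtrancl.rtrancl_into_rtrancl)
  qed
  then show ?thesis using assms(2) d by simp
qed

lemma merge_step_lift:
  assumes c: "c \<in> NC_chains n" and ms: "merge_step n (dyck_collection c) F'"
  obtains \<sigma> where "c @ [\<sigma>] \<in> NC_chains n" "dyck_collection (c @ [\<sigma>]) = F'"
proof -
  obtain B e C f where h: "(B, e) \<in> dyck_collection c" "(C, f) \<in> dyck_collection c" "(B, e) \<noteq> (C, f)" "mergeable B C"
    "F' = insert (dyck_merge B e C f) (dyck_collection c - {(B, e), (C, f)})" and F': "F' \<in> NCDyck n"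
    using ms unfolding merge_step_def by blast
  have B: "B \<in> last c" "e = block_path c B" and C: "C \<in> last c" "f = block_path c C" using h(1,2) unfolding dyck_collection_def by auto
  have BC: "B \<noteq> C" using h(3) B C by auto
  have \<pi>: "last c \<in> NC n" using NC_chains_last[OF c] .
  have p: "partition_on {1..n} (last c)" using NC_partition_on[OF \<pi>] .
  have m: "Min B < Min C" using h(4) unfolding mergeable_def by blast
  have "fst ` F' = merge_blocks (last c) B C"
  proof -
    have "fst ` F' = insert (B \<union> C) (fst ` (dyck_collection c - {(B, e), (C, f)}))" unfolding h(5) dyck_merge_def by simp
    also have "fst ` (dyck_collection c - {(B, e), (C, f)}) = last c - {B, C}" unfolding dyck_collection_def B C by force
    finally show ?thesis unfolding merge_blocks_def .
  qed
  then have \<sigma>: "merge_blocks (last c) B C \<in> NC n" using F' unfolding NCDyck_def by auto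
  have cov: "pcover (NC n) refines (last c) (merge_blocks (last c) B C)" using pcover_merge_blocks[OF \<pi> B(1) C(1) BC \<sigma>] .
  have cne: "c \<noteq> []" using c unfolding sat_chains_def by auto
  have "dyck_collection (c @ [merge_blocks (last c) B C]) = F'"
    using dyck_collection_snoc[OF cne p B(1) C(1) BC m NC_block_finite[OF \<pi> B(1)]] h(5) B C by simp
  then show ?thesis using that sat_chains_snoc[OF c cov] by blast
qed

section \<open>Rank two switching\<close>

lemma merge_blocks_swap:
  assumes "A \<union> B \<noteq> X" "A \<union> B \<noteq> Y" "X \<union> Y \<noteq> A" "X \<union> Y \<noteq> B"
  shows "merge_blocks (merge_blocks \<pi> A B) X Y = merge_blocks (merge_blocks \<pi> X Y) A B"
  using assms unfolding merge_blocks_def by auto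

lemma merge_blocks_nested:
  assumes "U \<union> V \<notin> \<pi>" "W \<noteq> U \<union> V"
  shows "merge_blocks (merge_blocks \<pi> U V) (U \<union> V) W = insert (U \<union> V \<union> W) (\<pi> - {U, V, W})"
  using assms unfolding merge_blocks_def by auto

definition rank_two_switch :: "nat \<Rightarrow> nat set set \<Rightarrow> nat set set \<Rightarrow> nat set set \<Rightarrow> bool" where
  "rank_two_switch n \<pi> \<sigma> \<rho> \<longleftrightarrow> (\<exists>\<sigma>'. pcover (NC n) refines \<pi> \<sigma>' \<and> pcover (NC n) refines \<sigma>' \<rho> \<and>
     lamNC \<pi> \<sigma>' = lamNC \<sigma> \<rho> \<and> lamNC \<sigma>' \<rho> = lamNC \<pi> \<sigma>)"

lemma rank_two_switchI:
  assumes "\<sigma>' \<in> NC n" "merge_blocks \<pi> P Q = \<sigma>'" "merge_blocks \<sigma>' U V = \<rho>"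
    and "\<pi> \<in> NC n" "P \<in> \<pi>" "Q \<in> \<pi>" "P \<noteq> Q" "U \<in> \<sigma>'" "V \<in> \<sigma>'" "U \<noteq> V" "\<rho> \<in> NC n"
    and "lamNC \<pi> \<sigma>' = lamNC \<sigma> \<rho>" "lamNC \<sigma>' \<rho> = lamNC \<pi> \<sigma>"
  shows "rank_two_switch n \<pi> \<sigma> \<rho>"
  unfolding rank_two_switch_def using assms pcover_merge_blocks by metis

lemma switch_disjoint_merges:
  assumes \<pi>: "\<pi> \<in> NC n" and AB: "A \<in> \<pi>" "B \<in> \<pi>" "A \<noteq> B" "Min A < Min B"
    and XY: "X \<in> \<pi>" "Y \<in> \<pi>" "X \<noteq> Y" "Min X < Min Y" and other: "X \<notin> {A, B}" "Y \<notin> {A, B}"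
    and \<sigma>: "merge_blocks \<pi> A B \<in> NC n" and \<rho>: "merge_blocks (merge_blocks \<pi> A B) X Y \<in> NC n"
  shows "rank_two_switch n \<pi> (merge_blocks \<pi> A B) (merge_blocks (merge_blocks \<pi> A B) X Y)"
proof -
  note p = NC_partition_on[OF \<pi>]
  let ?\<sigma> = "merge_blocks \<pi> A B" and ?\<rho> = "merge_blocks (merge_blocks \<pi> A B) X Y"
  define \<sigma>' where "\<sigma>' = merge_blocks \<pi> X Y"
  have ABnP: "A \<union> B \<notin> \<pi>" using partition_on_union_notin[OF p AB(1-3)] .
  have XYne: "X \<noteq> {}" "Y \<noteq> {}" using partition_on_block_nonempty[OF p] XY by auto
  have XYnAB: "X \<union> Y \<noteq> A" "X \<union> Y \<noteq> B" "X \<union> Y \<noteq> A \<union> B"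
    using partition_on_disjoint[OF p XY(1) AB(1)] partition_on_disjoint[OF p XY(1) AB(2)] other XYne
    by auto
  have XY\<sigma>: "X \<in> ?\<sigma>" "Y \<in> ?\<sigma>" by (intro merge_blocks_other_in; use XY other in blast)+
  have ABX: "A \<union> B \<noteq> X" "A \<union> B \<noteq> Y" using ABnP XY by auto
  have \<rho>_eq: "?\<rho> = merge_blocks \<sigma>' A B" unfolding \<sigma>'_def using merge_blocks_swap[OF ABX XYnAB(1,2)] .
  have XY\<rho>: "X \<union> Y \<in> ?\<rho>" and AB\<rho>: "A \<union> B \<in> ?\<rho>"
    using merge_blocks_union_in merge_blocks_other_in[OF merge_blocks_union_in ABX] by auto
  have "\<not> crossing (X \<union> Y) E \<and> \<not> crossing E (X \<union> Y)" if E: "E \<in> \<pi>" "E \<noteq> X" "E \<noteq> Y" for E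
  proof -
    obtain R where R: "R \<in> ?\<rho>" "E \<subseteq> R" "R \<noteq> X \<union> Y"
    proof (cases "E = A \<or> E = B")
      case True
      then show ?thesis using that[OF AB\<rho>] XYnAB(3) by blast
    next
      case False
      have "E \<in> ?\<rho>" using merge_blocks_other_in[OF merge_blocks_other_in[OF E(1)]] False E(2,3) by blast
      moreover have "E \<noteq> X \<union> Y" using partition_on_disjoint[OF p E(1) XY(1) E(2)] XYne(1) by blast
      ultimately show ?thesis using that by blast
    qed
    then show ?thesis
      using separated_not_crossing[OF NC_noncrossing[OF \<rho>] XY\<rho> R(1) R(3)[symmetric] subset_refl R(2)] by blast
  qed
  then have \<sigma>'NC: "\<sigma>' \<in> NC n" unfolding \<sigma>'_def by (rule merge_blocks_NC[OF \<pi> XY(1-3)])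
  have AB\<sigma>': "A \<in> \<sigma>'" "B \<in> \<sigma>'"
    unfolding \<sigma>'_def by (intro merge_blocks_other_in; use AB other in blast)+
  have "lamNC \<pi> \<sigma>' = lamNC ?\<sigma> ?\<rho>"
    unfolding \<sigma>'_def using lamNC_merge_blocks[OF p XY] lamNC_merge_blocks[OF NC_partition_on[OF \<sigma>] XY\<sigma> XY(3,4)]
    by simp
  moreover have "lamNC \<sigma>' ?\<rho> = lamNC \<pi> ?\<sigma>"
    unfolding \<rho>_eq using lamNC_merge_blocks[OF NC_partition_on[OF \<sigma>'NC] AB\<sigma>' AB(3,4)] lamNC_merge_blocks[OF p AB]
    by simp
  ultimately show ?thesis
    using rank_two_switchI[OF \<sigma>'NC \<sigma>'_def[symmetric] \<rho>_eq[symmetric] \<pi> XY(1-3) AB\<sigma>' AB(3) \<rho>] by blast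
qed

locale nested_merges =
  fixes n :: nat and \<pi> :: "nat set set" and A B Y :: "nat set"
  assumes \<pi>: "\<pi> \<in> NC n" and AB: "A \<in> \<pi>" "B \<in> \<pi>" "A \<noteq> B" "Min A < Min B"
    and Y: "Y \<in> \<pi>" "Y \<noteq> A" "Y \<noteq> B" "Min (A \<union> B) < Min Y"
    and \<sigma>: "merge_blocks \<pi> A B \<in> NC n" and \<rho>: "merge_blocks (merge_blocks \<pi> A B) (A \<union> B) Y \<in> NC n"
    and lt: "Max {x\<in>A. x < Min B} < Max {x\<in>A \<union> B. x < Min Y}"
begin

abbreviation "\<sigma>0 \<equiv> merge_blocks \<pi> A B"
abbreviation "\<rho>0 \<equiv> merge_blocks (merge_blocks \<pi> A B) (A \<union> B) Y"
abbreviation "l1 \<equiv> Max {x\<in>A. x < Min B}"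
abbreviation "l2 \<equiv> Max {x\<in>A \<union> B. x < Min Y}"

lemma partition: "partition_on {1..n} \<pi>"
  using NC_partition_on[OF \<pi>] .

lemma finite_blocks: "finite A" "finite B" "finite Y"
  using NC_block_finite[OF \<pi>] AB Y by auto

lemma nonempty_blocks: "A \<noteq> {}" "B \<noteq> {}" "Y \<noteq> {}"
  using partition_on_block_nonempty[OF partition] AB Y by auto

lemma union_notin: "A \<union> B \<notin> \<pi>"
  using partition_on_union_notin[OF partition AB(1-3)] .

lemma blocks_\<sigma>0: "A \<union> B \<in> \<sigma>0" "Y \<in> \<sigma>0" "Y \<noteq> A \<union> B"
  using merge_blocks_union_in merge_blocks_other_in Y union_notin by auto

lemma l1_less: "l1 < Min B" and le_l1: "x \<in> A \<Longrightarrow> x < Min B \<Longrightarrow> x \<le> l1"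
  using Max_below_Min(2)[OF finite_blocks(1) nonempty_blocks(1) AB(4)] finite_blocks(1) by auto

lemma l2_less: "l2 < Min Y" and le_l2: "x \<in> A \<union> B \<Longrightarrow> x < Min Y \<Longrightarrow> x \<le> l2"
  using Max_below_Min(2)[of "A \<union> B" Y] finite_blocks nonempty_blocks Y(4) by auto

lemma A_around_B: "\<forall>a\<in>A. a < Min B \<or> Max B < a"
  using mergeable_NC[OF \<pi> AB] unfolding mergeable_def by blast

lemma AB_around_Y: "\<forall>z\<in>A \<union> B. z < Min Y \<or> Max Y < z"
  using mergeable_NC[OF \<sigma> blocks_\<sigma>0(1,2) blocks_\<sigma>0(3)[symmetric] Y(4)] unfolding mergeable_def by blast

lemma \<rho>0_eq: "\<rho>0 = insert (A \<union> B \<union> Y) (\<pi> - {A, B, Y})"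
  using merge_blocks_nested[OF union_notin blocks_\<sigma>0(3)] .

lemma lamNC_\<sigma>0: "lamNC \<pi> \<sigma>0 = l1" "lamNC \<sigma>0 \<rho>0 = l2"
  using lamNC_merge_blocks[OF partition AB] lamNC_merge_blocks[OF NC_partition_on[OF \<sigma>] blocks_\<sigma>0(1,2)]
    blocks_\<sigma>0(3) Y(4) by auto

lemma other_not_crossing:
  assumes E: "E \<in> \<pi>" "E \<noteq> A" "E \<noteq> B" "E \<noteq> Y" and U: "U \<subseteq> A \<union> B \<union> Y"
  shows "\<not> crossing U E \<and> \<not> crossing E U"
proof -
  have "E \<in> \<rho>0" "A \<union> B \<union> Y \<in> \<rho>0" using \<rho>0_eq E by auto
  moreover have "A \<union> B \<union> Y \<noteq> E"
    using partition_on_disjoint[OF partition E(1) AB(1) E(2)] nonempty_blocks(1) by auto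
  ultimately show ?thesis using separated_not_crossing[OF NC_noncrossing[OF \<rho>] _ _ _ U subset_refl] by simp
qed

text \<open>If the second label \<open>l2\<close> lies in \<open>B\<close>, merge \<open>B\<close> with \<open>Y\<close> first; the block \<open>A\<close> then lies
  outside the interval \<open>(l1, max (Max B) (Max Y)]\<close> that contains \<open>B \<union> Y\<close>.\<close>

lemma switch_right:
  assumes inB: "l2 \<in> B"
  shows "rank_two_switch n \<pi> \<sigma>0 \<rho>0"
proof -
  note fin = finite_blocks and ne = nonempty_blocks
  have mBY: "Min B < Min Y" using Min_le[OF fin(2) inB] l2_less by linarith
  define \<sigma>' where "\<sigma>' = merge_blocks \<pi> B Y"
  have "\<not> crossing (B \<union> Y) A \<and> \<not> crossing A (B \<union> Y)"
  proof -
    let ?M = "max (Max B) (Max Y)"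
    have "l1 < u \<and> u \<le> ?M" if u: "u \<in> B \<union> Y" for u
    proof (cases "u \<in> B")
      case True then show ?thesis using Min_le[OF fin(2) True] Max_ge[OF fin(2) True] l1_less by linarith
    next
      case False then have "u \<in> Y" using u by blast
      then show ?thesis using Min_le[OF fin(3)] Max_ge[OF fin(3)] l1_less mBY by fastforce
    qed
    moreover have "v \<le> l1 \<or> ?M < v" if v: "v \<in> A" for v
    proof (cases "v < Min B")
      case True then show ?thesis using le_l1 v by simp
    next
      case False
      then have "Max B < v" using A_around_B v by blast
      moreover have "l2 < v" using calculation Max_ge[OF fin(2) inB] by linarith
      then have "\<not> v < Min Y" using le_l2[OF UnI1[OF v]] by fastforce
      then have "Max Y < v" using AB_around_Y v by blast
      ultimately show ?thesis by simp
    qed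
    ultimately show ?thesis using interval_not_crossing[of "B \<union> Y" l1 ?M A] by blast
  qed
  then have "\<not> crossing (B \<union> Y) E \<and> \<not> crossing E (B \<union> Y)" if "E \<in> \<pi>" "E \<noteq> B" "E \<noteq> Y" for E
    using other_not_crossing[OF that(1) _ that(2,3), of "B \<union> Y"] by (cases "E = A") auto
  then have \<sigma>'NC: "\<sigma>' \<in> NC n" unfolding \<sigma>'_def by (rule merge_blocks_NC[OF \<pi> AB(2) Y(1) Y(3)[symmetric]])
  have BYnP: "B \<union> Y \<notin> \<pi>" using partition_on_union_notin[OF partition AB(2) Y(1) Y(3)[symmetric]] .
  then have AnBY: "A \<noteq> B \<union> Y" using AB(1) by auto
  have "merge_blocks \<sigma>' A (B \<union> Y) = merge_blocks \<sigma>' (B \<union> Y) A" by (rule merge_blocks_commute)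
  also have "\<dots> = insert (B \<union> Y \<union> A) (\<pi> - {B, Y, A})"
    unfolding \<sigma>'_def by (rule merge_blocks_nested[OF BYnP AnBY])
  finally have \<rho>_eq: "\<rho>0 = merge_blocks \<sigma>' A (B \<union> Y)" unfolding \<rho>0_eq by (simp add: Un_ac insert_commute)
  have A\<sigma>': "A \<in> \<sigma>'" "B \<union> Y \<in> \<sigma>'"
    unfolding \<sigma>'_def using merge_blocks_other_in AB Y merge_blocks_union_in by metis+
  have "Max {x\<in>B. x < Min Y} = l2" using inB l2_less le_l2 fin by (intro Max_eqI) auto
  then have "lamNC \<pi> \<sigma>' = lamNC \<sigma>0 \<rho>0"
    unfolding \<sigma>'_def lamNC_\<sigma>0 lamNC_merge_blocks[OF partition AB(2) Y(1) Y(3)[symmetric] mBY] .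
  moreover have MinBY: "Min (B \<union> Y) = Min B" using Min_Un[OF fin(2) ne(2) fin(3) ne(3)] mBY by simp
  then have "lamNC \<sigma>' \<rho>0 = lamNC \<pi> \<sigma>0"
    using lamNC_merge_blocks[OF NC_partition_on[OF \<sigma>'NC] A\<sigma>' AnBY] AB(4) lamNC_\<sigma>0
    unfolding \<rho>_eq by simp
  ultimately show ?thesis
    using rank_two_switchI[OF \<sigma>'NC \<sigma>'_def[symmetric] \<rho>_eq[symmetric] \<pi> AB(2) Y(1) Y(3)[symmetric] A\<sigma>' AnBY \<rho>]
    by blast
qed

text \<open>If \<open>l2\<close> lies in \<open>A\<close>, it lies beyond \<open>B\<close>, so merge \<open>A\<close> with \<open>Y\<close> first; then \<open>B\<close> fills
  the interval \<open>(l1, Max B]\<close>, which \<open>A \<union> Y\<close> avoids.\<close>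

lemma switch_left:
  assumes inA: "l2 \<in> A"
  shows "rank_two_switch n \<pi> \<sigma>0 \<rho>0"
proof -
  note fin = finite_blocks and ne = nonempty_blocks
  have "\<not> l2 < Min B" using le_l1[of l2] inA lt by fastforce
  then have "Max B < l2" using A_around_B inA by blast
  then have YgtB: "\<forall>y\<in>Y. Max B < y" using Min_le[OF fin(3)] l2_less by fastforce
  have mAY: "Min A < Min Y" using Y(4) Min_Un[OF fin(1) ne(1) fin(2) ne(2)] AB(4) by simp
  define \<sigma>' where "\<sigma>' = merge_blocks \<pi> A Y"
  have "\<forall>u\<in>B. l1 < u \<and> u \<le> Max B" using Min_le[OF fin(2)] Max_ge[OF fin(2)] l1_less by fastforce
  moreover have "\<forall>v\<in>A \<union> Y. v \<le> l1 \<or> Max B < v" using le_l1 A_around_B YgtB by fastforce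
  ultimately have "\<not> crossing (A \<union> Y) B \<and> \<not> crossing B (A \<union> Y)"
    using interval_not_crossing[of B l1 "Max B" "A \<union> Y"] by blast
  then have "\<not> crossing (A \<union> Y) E \<and> \<not> crossing E (A \<union> Y)" if "E \<in> \<pi>" "E \<noteq> A" "E \<noteq> Y" for E
    using other_not_crossing[OF that(1,2) _ that(3), of "A \<union> Y"] by (cases "E = B") auto
  then have \<sigma>'NC: "\<sigma>' \<in> NC n" unfolding \<sigma>'_def by (rule merge_blocks_NC[OF \<pi> AB(1) Y(1) Y(2)[symmetric]])
  have AYnP: "A \<union> Y \<notin> \<pi>" using partition_on_union_notin[OF partition AB(1) Y(1) Y(2)[symmetric]] .
  then have AYnB: "B \<noteq> A \<union> Y" using AB(2) by auto
  have "merge_blocks \<sigma>' (A \<union> Y) B = insert (A \<union> Y \<union> B) (\<pi> - {A, Y, B})"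
    unfolding \<sigma>'_def by (rule merge_blocks_nested[OF AYnP AYnB])
  then have \<rho>_eq: "\<rho>0 = merge_blocks \<sigma>' (A \<union> Y) B" unfolding \<rho>0_eq by (simp add: Un_ac insert_commute)
  have B\<sigma>': "A \<union> Y \<in> \<sigma>'" "B \<in> \<sigma>'"
    unfolding \<sigma>'_def using merge_blocks_other_in AB Y merge_blocks_union_in by metis+
  have "Max {x\<in>A. x < Min Y} = l2" using inA l2_less le_l2 fin by (intro Max_eqI) auto
  then have "lamNC \<pi> \<sigma>' = lamNC \<sigma>0 \<rho>0"
    unfolding \<sigma>'_def lamNC_\<sigma>0 lamNC_merge_blocks[OF partition AB(1) Y(1) Y(2)[symmetric] mAY] .
  moreover have "Min (A \<union> Y) < Min B" using Min_Un[OF fin(1) ne(1) fin(3) ne(3)] mAY AB(4) by simp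
  moreover have "{x\<in>A \<union> Y. x < Min B} = {x\<in>A. x < Min B}"
    using YgtB Min_le[OF fin(2) Max_in[OF fin(2) ne(2)]] by fastforce
  ultimately show ?thesis
    using rank_two_switchI[OF \<sigma>'NC \<sigma>'_def[symmetric] \<rho>_eq[symmetric] \<pi> AB(1) Y(1) Y(2)[symmetric]
        B\<sigma>' AYnB[symmetric] \<rho>] lamNC_merge_blocks[OF NC_partition_on[OF \<sigma>'NC] B\<sigma>' AYnB[symmetric]]
      lamNC_\<sigma>0 unfolding \<rho>_eq by simp
qed

end

lemma lamNC_rank_two_switch:
  assumes c1: "pcover (NC n) refines \<pi> \<sigma>" and c2: "pcover (NC n) refines \<sigma> \<rho>"
    and lt: "lamNC \<pi> \<sigma> < lamNC \<sigma> \<rho>"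
  shows "rank_two_switch n \<pi> \<sigma> \<rho>"
proof -
  obtain A B where AB: "A \<in> \<pi>" "B \<in> \<pi>" "A \<noteq> B" "Min A < Min B" and \<sigma>_def: "\<sigma> = merge_blocks \<pi> A B"
    using pcover_NC_merge_blocks_ordered[OF c1] by blast
  obtain X Y where XY: "X \<in> \<sigma>" "Y \<in> \<sigma>" "X \<noteq> Y" "Min X < Min Y" and \<rho>_def: "\<rho> = merge_blocks \<sigma> X Y"
    using pcover_NC_merge_blocks_ordered[OF c2] by blast
  have \<pi>: "\<pi> \<in> NC n" and \<sigma>: "\<sigma> \<in> NC n" and \<rho>: "\<rho> \<in> NC n" using c1 c2 unfolding pcover_def by auto
  have fin: "finite A" "A \<noteq> {}" using NC_block_finite[OF \<pi> AB(1)] partition_on_block_nonempty[OF NC_partition_on[OF \<pi>] AB(1)] .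
  have lt': "Max {x\<in>A. x < Min B} < Max {x\<in>X. x < Min Y}"
    using lt lamNC_merge_blocks[OF NC_partition_on[OF \<pi>] AB] lamNC_merge_blocks[OF NC_partition_on[OF \<sigma>] XY]
    unfolding \<sigma>_def \<rho>_def by simp
  have "Min A < Min Y"
  proof -
    have "finite X" "X \<noteq> {}"
      using NC_block_finite[OF \<sigma> XY(1)] partition_on_block_nonempty[OF NC_partition_on[OF \<sigma>] XY(1)] .
    then have "Max {x\<in>X. x < Min Y} < Min Y" using Max_below_Min(2) XY(4) by blast
    moreover have "Min A \<le> Max {x\<in>A. x < Min B}" using Min_le[OF fin(1) Max_below_Min(1)[OF fin AB(4)]] .
    ultimately show ?thesis using lt' by linarith
  qed
  moreover have "Min (A \<union> B) \<le> Min A"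
    using Min_Un[OF fin NC_block_finite[OF \<pi> AB(2)] partition_on_block_nonempty[OF NC_partition_on[OF \<pi>] AB(2)]]
    by simp
  ultimately have "Y \<noteq> A \<union> B" by auto
  then consider (disjoint) "X \<in> \<pi>" "X \<noteq> A" "X \<noteq> B" "Y \<in> \<pi>" "Y \<noteq> A" "Y \<noteq> B"
    | (nested) "X = A \<union> B" "Y \<in> \<pi>" "Y \<noteq> A" "Y \<noteq> B"
    using merge_blocks_cases XY(1-3) unfolding \<sigma>_def by metis
  then show ?thesis
  proof cases
    case disjoint
    then show ?thesis using switch_disjoint_merges[OF \<pi> AB _ _ XY(3,4)] \<sigma> \<rho> unfolding \<sigma>_def \<rho>_def by blast
  next
    case nested
    have "Max {x\<in>A \<union> B. x < Min Y} \<in> A \<union> B"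
      using Max_below_Min(1)[of "A \<union> B" Y] XY(4) nested(1) NC_block_finite[OF \<sigma> XY(1)]
        partition_on_block_nonempty[OF NC_partition_on[OF \<sigma>] XY(1)] by blast
    moreover have "nested_merges n \<pi> A B Y"
      using \<pi> AB nested(2-4) XY(4) \<sigma> \<rho> lt' unfolding nested_merges_def \<sigma>_def \<rho>_def nested(1) by auto
    ultimately show ?thesis
      using nested_merges.switch_left nested_merges.switch_right unfolding \<sigma>_def \<rho>_def nested(1) by blast
  qed
qed

section \<open>Chains with descending labels\<close>

lemma nth_labels: "Suc j < length c \<Longrightarrow> labels c ! j = lamNC (c ! j) (c ! Suc j)"
  unfolding labels_def by (simp add: less_diff_conv)

lemma quad_exch_sat_chains:
  assumes c: "c \<in> sat_chains P le z" and q: "quad_exch P le lam c d"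
  shows "d \<in> sat_chains P le z" "last d = last c" "length d = length c"
proof -
  obtain i x' where h: "0 < i" "Suc i < length c" "d = c[i := x']"
    "pcover P le (c ! (i - 1)) x'" "pcover P le x' (c ! Suc i)"
    using q unfolding quad_exch_def by blast
  have cs: "c \<noteq> []" "hd c = z" "set c \<subseteq> P" "\<And>j. Suc j < length c \<Longrightarrow> pcover P le (c ! j) (c ! Suc j)"
    using c unfolding sat_chains_def by auto
  show len: "length d = length c" using h(3) by simp
  have dj: "d ! j = (if j = i then x' else c ! j)" if "j < length c" for j using h(3) that by simp
  show "last d = last c" using h(2,3) cs(1) by (simp add: last_conv_nth)
  show "d \<in> sat_chains P le z"
    unfolding sat_chains_def
  proof (intro CollectI conjI allI impI)
    show "d \<noteq> []" using cs(1) h(3) by simp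
    show "hd d = z" using cs(1,2) h(1,3) by (cases c) (auto simp: nth_Cons split: nat.splits)
    have "x' \<in> P" using h(4) unfolding pcover_def by auto
    then show "set d \<subseteq> P" using cs(3) h(3) set_update_subset_insert by fastforce
    fix j assume j: "Suc j < length d"
    consider "j = i - 1" | "j = i" | "j \<noteq> i - 1" "j \<noteq> i" by blast
    then show "pcover P le (d ! j) (d ! Suc j)"
    proof cases
      case 1 then show ?thesis using h(4) dj j len h(1) by auto
    next
      case 2 then show ?thesis using h(5) dj j len by auto
    next
      case 3
      then have "Suc j \<noteq> i" using h(1) by auto
      then show ?thesis using cs(4)[of j] dj j len 3 by auto
    qed
  qed
qed

lemma quad_exch_labels:
  assumes "quad_exch P le lamNC c d"
  obtains k where "Suc k < length (labels c)" "labels c ! k < labels c ! Suc k"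
    "labels d = (labels c)[k := labels c ! Suc k, Suc k := labels c ! k]"
proof -
  obtain i x' where h: "0 < i" "Suc i < length c" "d = c[i := x']"
    "lamNC (c ! (i - 1)) (c ! i) < lamNC (c ! i) (c ! Suc i)"
    "lamNC (c ! (i - 1)) x' = lamNC (c ! i) (c ! Suc i)" "lamNC x' (c ! Suc i) = lamNC (c ! (i - 1)) (c ! i)"
    using assms unfolding quad_exch_def by blast
  let ?k = "i - 1"
  have Sk: "Suc ?k = i" using h(1) by simp
  have dj: "d ! j = (if j = i then x' else c ! j)" if "j < length c" for j using h(3) that by simp
  have "labels d = (labels c)[?k := labels c ! Suc ?k, Suc ?k := labels c ! ?k]"
  proof (rule nth_equalityI)
    show "length (labels d) = length ((labels c)[?k := labels c ! Suc ?k, Suc ?k := labels c ! ?k])"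
      using h(3) by (simp add: labels_def)
    fix j assume "j < length (labels d)"
    then have j: "Suc j < length c" and jd: "Suc j < length d" using h(3) by (simp_all add: labels_def)
    consider "j = ?k" | "j = i" | "j \<noteq> ?k" "j \<noteq> i" by blast
    then show "labels d ! j = (labels c)[?k := labels c ! Suc ?k, Suc ?k := labels c ! ?k] ! j"
    proof cases
      case 1
      have "labels d ! j = lamNC (c ! (i - 1)) x'" using nth_labels[OF jd] dj 1 j h(1) Sk by auto
      then show ?thesis using h(2,5) nth_labels[of i c] 1 Sk j by (simp add: labels_def)
    next
      case 2
      have "labels d ! j = lamNC x' (c ! Suc i)" using nth_labels[OF jd] dj 2 j by auto
      then show ?thesis using h(2,6) nth_labels[of ?k c] 2 Sk j by (simp add: labels_def)
    next
      case 3
      then have "Suc j \<noteq> i" using h(1) by auto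
      then show ?thesis using nth_labels[OF jd] nth_labels[OF j] dj j 3 Sk by auto
    qed
  qed
  moreover have "labels c ! ?k < labels c ! Suc ?k" using h(2,4) nth_labels Sk by (metis Suc_lessD)
  moreover have "Suc ?k < length (labels c)" using Sk h(2) by (simp add: labels_def)
  ultimately show ?thesis using that by blast
qed

lemma quad_exch_label_count:
  assumes "quad_exch P le lamNC c d"
  shows "label_count d = label_count c"
proof -
  obtain k where "Suc k < length (labels c)" "labels d = (labels c)[k := labels c ! Suc k, Suc k := labels c ! k]"
    using quad_exch_labels[OF assms] by blast
  then have "mset (labels d) = mset (labels c)" using mset_swap[of "Suc k" "labels c" k] by simp
  then show ?thesis unfolding label_count_def by auto
qed

lemma quad_exch_dyck_collection:
  assumes "c \<in> sat_chains P le z" "quad_exch P le lamNC c d"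
  shows "dyck_collection d = dyck_collection c"
  unfolding dyck_collection_def block_path_def quad_exch_label_count[OF assms(2)]
    quad_exch_sat_chains(2)[OF assms] ..

definition label_weight :: "nat list \<Rightarrow> nat" where
  "label_weight xs = (\<Sum>j<length xs. Suc j * xs ! j)"

lemma label_weight_swap:
  assumes "Suc k < length xs" "xs ! k < xs ! Suc k"
  shows "label_weight (xs[k := xs ! Suc k, Suc k := xs ! k]) < label_weight xs"
proof -
  let ?ys = "xs[k := xs ! Suc k, Suc k := xs ! k]"
  let ?S = "{..<length xs}" let ?D = "{k, Suc k}"
  have D: "?D \<subseteq> ?S" using assms by auto
  have sp: "(\<Sum>j\<in>?S. f j) = (\<Sum>j\<in>?S - ?D. f j) + (\<Sum>j\<in>?D. f j)" for f :: "nat \<Rightarrow> nat"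
    using sum.subset_diff[OF D] by simp
  have "(\<Sum>j\<in>?S - ?D. Suc j * ?ys ! j) = (\<Sum>j\<in>?S - ?D. Suc j * xs ! j)"
    by (intro sum.cong) auto
  moreover have "(\<Sum>j\<in>?D. Suc j * ?ys ! j) < (\<Sum>j\<in>?D. Suc j * xs ! j)"
    using assms by (simp add: algebra_simps)
  ultimately show ?thesis
    unfolding label_weight_def using sp[of "\<lambda>j. Suc j * ?ys ! j"] sp[of "\<lambda>j. Suc j * xs ! j"] by simp
qed

definition labels_descending :: "nat set set list \<Rightarrow> bool" where
  "labels_descending c \<longleftrightarrow> (\<forall>j. Suc j < length (labels c) \<longrightarrow> labels c ! Suc j \<le> labels c ! j)"

abbreviation NC_chain_equiv :: "nat \<Rightarrow> (nat set set list \<times> nat set set list) set" where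
  "NC_chain_equiv n \<equiv> chain_equiv (NC n) refines (NC_bot n) lamNC"

lemma NC_chain_equivI:
  "c \<in> NC_chains n \<Longrightarrow> quad_exch (NC n) refines lamNC c d \<Longrightarrow> (c, d) \<in> NC_chain_equiv n"
  using quad_exch_sat_chains(1)[of c] unfolding chain_equiv_def by (intro r_into_rtrancl) blast

lemma sym_NC_chain_equiv: "sym (NC_chain_equiv n)"
  unfolding chain_equiv_def by (rule sym_rtrancl) (auto simp: sym_def)

lemma trans_NC_chain_equiv: "trans (NC_chain_equiv n)"
  unfolding chain_equiv_def by (rule trans_rtrancl)

lemma NC_chain_equiv_dyck_collection:
  assumes "(c, d) \<in> NC_chain_equiv n" "c \<in> NC_chains n"
  shows "d \<in> NC_chains n" "dyck_collection d = dyck_collection c"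
  using assms unfolding chain_equiv_def
  by (induction rule: rtrancl_induct) (auto dest: quad_exch_dyck_collection)

lemma NC_chain_equiv_descending:
  assumes "c \<in> NC_chains n"
  obtains d where "(c, d) \<in> NC_chain_equiv n" "d \<in> NC_chains n" "labels_descending d"
  using assms
proof (induction "label_weight (labels c)" arbitrary: c rule: less_induct)
  case less
  show ?case
  proof (cases "labels_descending c")
    case True
    then show ?thesis using less.prems unfolding chain_equiv_def by blast
  next
    case False
    then obtain j where j: "Suc j < length (labels c)" "labels c ! j < labels c ! Suc j"
      unfolding labels_descending_def by (auto simp: not_le)
    have len: "Suc (Suc j) < length c" using j(1) by (simp add: labels_def)
    have cov: "\<And>m. Suc m < length c \<Longrightarrow> pcover (NC n) refines (c ! m) (c ! Suc m)"
      using less.prems unfolding sat_chains_def by auto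
    have lt: "lamNC (c ! j) (c ! Suc j) < lamNC (c ! Suc j) (c ! Suc (Suc j))"
      using j(2) nth_labels len by (metis Suc_lessD)
    then have "rank_two_switch n (c ! j) (c ! Suc j) (c ! Suc (Suc j))"
      by (rule lamNC_rank_two_switch[OF cov[OF Suc_lessD[OF len]] cov[OF len]])
    then obtain x' where x': "pcover (NC n) refines (c ! j) x'" "pcover (NC n) refines x' (c ! Suc (Suc j))"
      "lamNC (c ! j) x' = lamNC (c ! Suc j) (c ! Suc (Suc j))" "lamNC x' (c ! Suc (Suc j)) = lamNC (c ! j) (c ! Suc j)"
      unfolding rank_two_switch_def by blast
    define d where "d = c[Suc j := x']"
    have q: "quad_exch (NC n) refines lamNC c d" unfolding quad_exch_def d_def
      using len lt x' by (intro exI[of _ "Suc j"] exI[of _ x']) simp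
    obtain k where k: "Suc k < length (labels c)" "labels c ! k < labels c ! Suc k"
      "labels d = (labels c)[k := labels c ! Suc k, Suc k := labels c ! k]" using quad_exch_labels[OF q] by blast
    have "label_weight (labels d) < label_weight (labels c)" using label_weight_swap[OF k(1,2)] k(3) by simp
    then show ?thesis
    proof (rule less.hyps[OF _ _ quad_exch_sat_chains(1)[OF less.prems(2) q]])
      fix e assume "(d, e) \<in> NC_chain_equiv n" "e \<in> NC_chains n" "labels_descending e"
      moreover have "(c, d) \<in> NC_chain_equiv n" using NC_chain_equivI[OF less.prems(2) q] .
      ultimately show thesis using less.prems(1) trans_NC_chain_equiv unfolding trans_def by blast
    qed
  qed
qed

lemma descending_last_le:
  fixes xs :: "nat list"
  assumes desc: "\<forall>j. Suc j < length xs \<longrightarrow> xs ! Suc j \<le> xs ! j" and x: "x \<in> set xs"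
  shows "last xs \<le> x"
proof -
  have mono: "xs ! k \<le> xs ! i" if "i \<le> k" "k < length xs" for i k
    using that by (induction k rule: dec_induct) (use desc in fastforce)+
  obtain i where i: "i < length xs" "xs ! i = x" using x by (auto simp: in_set_conv_nth)
  then have "xs ! (length xs - 1) \<le> x" using mono[of i "length xs - 1"] by simp
  moreover have "xs \<noteq> []" using x by auto
  ultimately show ?thesis by (simp add: last_conv_nth)
qed

lemma labels_descending_butlast:
  assumes "labels_descending c" "c \<noteq> []"
  shows "labels_descending (butlast c)"
proof (cases "butlast c = []")
  case True then show ?thesis unfolding labels_descending_def labels_def by simp
next
  case False
  have lc: "labels c = labels (butlast c) @ [lamNC (last (butlast c)) (last c)]"
    using labels_snoc[OF False, of "last c"] assms(2) by simp
  show ?thesis unfolding labels_descending_def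
  proof (intro allI impI)
    fix j assume j: "Suc j < length (labels (butlast c))"
    then have "labels c ! Suc j = labels (butlast c) ! Suc j" "labels c ! j = labels (butlast c) ! j"
      "Suc j < length (labels c)" using lc by (simp_all add: nth_append)
    then show "labels (butlast c) ! Suc j \<le> labels (butlast c) ! j"
      using assms(1) unfolding labels_descending_def by metis
  qed
qed

lemma first_return_last_merge:
  assumes c0: "c0 \<in> NC_chains n" and AB: "A \<in> last c0" "B \<in> last c0" "A \<noteq> B" "Min A < Min B"
  shows "first_return (A \<union> B) (label_count (c0 @ [merge_blocks (last c0) A B])) (Max {x\<in>A. x < Min B}) = B"
proof -
  have \<pi>: "last c0 \<in> NC n" using NC_chains_last[OF c0] .
  note p = NC_partition_on[OF \<pi>]
  have c0ne: "c0 \<noteq> []" using c0 unfolding sat_chains_def by blast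
  have fA: "finite A" "A \<noteq> {}" and fB: "finite B"
    using NC_block_finite[OF \<pi>] partition_on_block_nonempty[OF p] AB by auto
  define a where "a = Max {x\<in>A. x < Min B}"
  have a: "a \<in> A" "a < Min B" using Max_below_Min[OF fA AB(4)] unfolding a_def by auto
  have aB: "\<forall>b\<in>B. a < b" using a(2) Min_le[OF fB] by fastforce
  have count: "label_count (c0 @ [merge_blocks (last c0) A B]) x = label_count c0 x + (if x = a then 1 else 0)" for x
    using label_count_snoc[OF c0ne] lamNC_merge_blocks[OF p AB] unfolding a_def by simp
  have "x \<le> a \<or> (\<forall>b\<in>B. b < x)" if x: "x \<in> A" for x
  proof (cases "x < Min B")
    case True then show ?thesis unfolding a_def using x fA(1) by simp
  next
    case False then have "Max B < x" using mergeable_NC[OF \<pi> AB] x unfolding mergeable_def by blast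
    then show ?thesis using Max_ge[OF fB] by fastforce
  qed
  moreover have "dyck B (block_path c0 B)"
    using dyck_collection_dyck[OF c0] AB(2) unfolding dyck_collection_def by auto
  moreover have "\<forall>x\<in>B. label_count (c0 @ [merge_blocks (last c0) A B]) x = block_path c0 B x"
    using count aB unfolding block_path_def by fastforce
  ultimately show ?thesis
    using first_return_merge[OF _ fA(1) partition_on_disjoint[OF p AB(1-3)] a(1) aB] unfolding a_def by blast
qed

lemma labels_descending_last_eq:
  assumes "labels_descending c" "labels_descending d" "mset (labels c) = mset (labels d)"
    "labels c = xs @ [a]" "labels d = ys @ [b]"
  shows "a = b"
proof -
  have "set (labels c) = set (labels d)" using assms(3) by (metis set_mset_mset)
  then have "b \<in> set (labels c)" "a \<in> set (labels d)" using assms(4,5) by auto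
  then have "last (labels c) \<le> b" "last (labels d) \<le> a"
    using descending_last_le assms(1,2) unfolding labels_descending_def by blast+
  then show ?thesis using assms(4,5) by simp
qed

lemma last_merges_eq:
  assumes c0: "c0 \<in> NC_chains n" "A \<in> last c0" "B \<in> last c0" "A \<noteq> B" "Min A < Min B"
    and d0: "d0 \<in> NC_chains n" "A' \<in> last d0" "B' \<in> last d0" "A' \<noteq> B'" "Min A' < Min B'"
    and last_eq: "merge_blocks (last c0) A B = merge_blocks (last d0) A' B'"
    and label_eq: "Max {x\<in>A. x < Min B} = Max {x\<in>A'. x < Min B'}"
    and count_eq: "label_count (c0 @ [merge_blocks (last c0) A B]) = label_count (d0 @ [merge_blocks (last d0) A' B'])"
  shows "A = A'" "B = B'"
proof -
  have \<pi>: "last c0 \<in> NC n" "last d0 \<in> NC n"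
    using NC_chains_last[OF c0(1)] NC_chains_last[OF d0(1)] .
  note pc = NC_partition_on[OF \<pi>(1)] and pd = NC_partition_on[OF \<pi>(2)]
  have "Max {x\<in>A. x < Min B} \<in> A"
    using Max_below_Min(1)[OF NC_block_finite[OF \<pi>(1) c0(2)] partition_on_block_nonempty[OF pc c0(2)] c0(5)] .
  moreover have "Max {x\<in>A'. x < Min B'} \<in> A'"
    using Max_below_Min(1)[OF NC_block_finite[OF \<pi>(2) d0(2)] partition_on_block_nonempty[OF pd d0(2)] d0(5)] .
  ultimately have in_both: "Max {x\<in>A. x < Min B} \<in> A \<union> B" "Max {x\<in>A. x < Min B} \<in> A' \<union> B'"
    using label_eq by auto
  have "A' \<union> B' \<in> merge_blocks (last c0) A B" unfolding last_eq by (rule merge_blocks_union_in)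
  then have union_eq: "A \<union> B = A' \<union> B'"
    using partition_on_block_eq[OF partition_on_merge_blocks[OF pc c0(2-4)] merge_blocks_union_in _ in_both]
    by blast
  show "B = B'"
    using first_return_last_merge[OF c0] first_return_last_merge[OF d0]
    unfolding union_eq count_eq label_eq by simp
  then show "A = A'"
    using union_eq partition_on_disjoint[OF pc c0(2-4)] partition_on_disjoint[OF pd d0(2-4)] by blast
qed

lemma descending_chains_eq:
  assumes "c \<in> NC_chains n" "d \<in> NC_chains n" "labels_descending c" "labels_descending d"
    "last c = last d" "label_count c = label_count d"
  shows "c = d"
  using assms
proof (induction "length c" arbitrary: c d rule: less_induct)
  case less
  have ms: "mset (labels c) = mset (labels d)"
    using less.prems(6) unfolding label_count_def by (intro multiset_eqI) metis
  have cne: "c \<noteq> []" and dne: "d \<noteq> []" using less.prems(1,2) unfolding sat_chains_def by blast+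
  have lcd: "length c = length d"
    using mset_eq_length[OF ms] cne dne by (cases c; cases d) (auto simp: labels_def)
  show ?case
  proof (cases "length c \<ge> 2")
    case False
    moreover have "length c \<noteq> 0" using cne by simp
    ultimately have "length c = 1" "length d = 1" using lcd by linarith+
    then obtain x y where "c = [x]" "d = [y]" by (metis One_nat_def length_0_conv length_Suc_conv)
    then show ?thesis using less.prems(1,2) by (simp add: sat_chains_single)
  next
    case True
    obtain c0 A B where dc: "c0 \<in> NC_chains n" "c = c0 @ [merge_blocks (last c0) A B]" "A \<in> last c0"
      "B \<in> last c0" "A \<noteq> B" "Min A < Min B" "last c0 \<in> NC n" "merge_blocks (last c0) A B \<in> NC n"
      using NC_chains_snoc_merge[OF less.prems(1) True] by blast
    obtain d0 A' B' where dd: "d0 \<in> NC_chains n" "d = d0 @ [merge_blocks (last d0) A' B']" "A' \<in> last d0"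
      "B' \<in> last d0" "A' \<noteq> B'" "Min A' < Min B'" "last d0 \<in> NC n" "merge_blocks (last d0) A' B' \<in> NC n"
      using NC_chains_snoc_merge[OF less.prems(2)] True lcd by auto
    note pc = NC_partition_on[OF dc(7)] and pd = NC_partition_on[OF dd(7)]
    have c0ne: "c0 \<noteq> []" and d0ne: "d0 \<noteq> []" using dc(1) dd(1) unfolding sat_chains_def by blast+
    have lam: "lamNC (last c0) (merge_blocks (last c0) A B) = Max {x\<in>A. x < Min B}"
      "lamNC (last d0) (merge_blocks (last d0) A' B') = Max {x\<in>A'. x < Min B'}"
      using lamNC_merge_blocks[OF pc dc(3-6)] lamNC_merge_blocks[OF pd dd(3-6)] .
    have label_eq: "Max {x\<in>A. x < Min B} = Max {x\<in>A'. x < Min B'}"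
      using labels_descending_last_eq[OF less.prems(3,4) ms] labels_snoc[OF c0ne] labels_snoc[OF d0ne]
        dc(2) dd(2) lam by simp
    have last_eq: "merge_blocks (last c0) A B = merge_blocks (last d0) A' B'" using less.prems(5) dc(2) dd(2) by simp
    note eqs = last_merges_eq[OF dc(1,3-6) dd(1,3-6) last_eq label_eq less.prems(6)[unfolded dc(2) dd(2)]]
    have "last c0 = insert A (insert B (merge_blocks (last c0) A B - {A \<union> B}))"
      using unmerge_blocks[OF partition_on_union_notin[OF pc dc(3-5)] dc(3,4)] by simp
    also have "\<dots> = last d0"
      using unmerge_blocks[OF partition_on_union_notin[OF pd dd(3-5)] dd(3,4)] unfolding last_eq unfolding eqs .
    finally have "last c0 = last d0" .
    moreover have "label_count c0 = label_count d0"
    proof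
      fix x
      show "label_count c0 x = label_count d0 x"
        using fun_cong[OF less.prems(6), of x] label_count_snoc[OF c0ne] label_count_snoc[OF d0ne] dc(2) dd(2)
          lam label_eq by simp
    qed
    moreover have "labels_descending c0" "labels_descending d0"
      using labels_descending_butlast[OF less.prems(3) cne] labels_descending_butlast[OF less.prems(4) dne]
        dc(2) dd(2) by auto
    ultimately have "c0 = d0" using less.hyps dc(1,2) dd(1) by fastforce
    then show ?thesis using dc(2) dd(2) eqs by simp
  qed
qed

lemma NC_chain_equiv_if_dyck_collection_eq:
  assumes "c \<in> NC_chains n" "d \<in> NC_chains n" "dyck_collection c = dyck_collection d"
  shows "(c, d) \<in> NC_chain_equiv n"
proof -
  obtain c' where c': "(c, c') \<in> NC_chain_equiv n" "c' \<in> NC_chains n" "labels_descending c'"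
    using NC_chain_equiv_descending[OF assms(1)] by blast
  obtain d' where d': "(d, d') \<in> NC_chain_equiv n" "d' \<in> NC_chains n" "labels_descending d'"
    using NC_chain_equiv_descending[OF assms(2)] by blast
  have "dyck_collection c' = dyck_collection d'"
    using NC_chain_equiv_dyck_collection(2) c' d' assms by metis
  then have "c' = d'"
    using descending_chains_eq[OF c'(2) d'(2) c'(3) d'(3)] dyck_collection_eqD[OF c'(2) d'(2)] by blast
  then show ?thesis
    using c'(1) d'(1) sym_NC_chain_equiv trans_NC_chain_equiv unfolding sym_def trans_def by blast
qed

section \<open>Every collection comes from a chain\<close>

lemma NC_split_singleton:
  assumes \<pi>: "\<pi> \<in> NC n" and S: "S \<in> \<pi>" "b \<in> S" "S \<noteq> {b}"
  shows "insert (S - {b}) (insert {b} (\<pi> - {S})) \<in> NC n"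
proof -
  let ?\<tau> = "insert (S - {b}) (insert {b} (\<pi> - {S}))"
  have nct: "noncrossing ?\<tau>"
    unfolding noncrossing_def
  proof (clarify)
    fix a b' c d X Y assume h: "a < b'" "b' < c" "c < d" "X \<in> ?\<tau>" "Y \<in> ?\<tau>" "X \<noteq> Y"
      "a \<in> X" "c \<in> X" "b' \<in> Y" "d \<in> Y"
    have nX: "X \<noteq> {b}" using h(1,2,7,8) by auto
    have nY: "Y \<noteq> {b}" using h(2,3,9,10) by auto
    have cX: "X = S - {b} \<or> X \<in> \<pi> - {S}" using h(4) nX by blast
    have cY: "Y = S - {b} \<or> Y \<in> \<pi> - {S}" using h(5) nY by blast
    define X' where "X' = (if X = S - {b} then S else X)"
    define Y' where "Y' = (if Y = S - {b} then S else Y)"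
    have X': "X' \<in> \<pi>" "X \<subseteq> X'" using cX S(1) unfolding X'_def by auto
    have Y': "Y' \<in> \<pi>" "Y \<subseteq> Y'" using cY S(1) unfolding Y'_def by auto
    have "X' \<noteq> Y'" using cX cY h(6) unfolding X'_def Y'_def by auto
    then show False using noncrossingD[OF NC_noncrossing[OF \<pi>] X'(1) Y'(1) _ h(1-3)] h(7-10) X'(2) Y'(2) by blast
  qed
  then show ?thesis using partition_on_split_block[OF NC_partition_on[OF \<pi>] S] unfolding NC_def by blast
qed

lemma NCDyck_finite:
  assumes "F \<in> NCDyck n"
  shows "finite F" "card F = card (fst ` F)" "card F \<le> n"
proof -
  have inj: "inj_on fst F" and nc: "fst ` F \<in> NC n" using assms unfolding NCDyck_def by auto
  show "finite F" using finite_imageD[OF NC_finite[OF nc] inj] .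
  show "card F = card (fst ` F)" using card_image[OF inj] by simp
  then show "card F \<le> n" using card_partition_on_le[OF NC_partition_on[OF nc]] by simp
qed

lemma NCDyck_singletons:
  assumes F: "F \<in> NCDyck n" and small: "\<forall>(S, e)\<in>F. card S < 2"
  shows "F = dyck_collection [NC_bot n]"
proof -
  have dF: "\<And>S e. (S, e) \<in> F \<Longrightarrow> dyck S e" and \<pi>: "fst ` F \<in> NC n" using F unfolding NCDyck_def by auto
  note p = NC_partition_on[OF \<pi>]
  have sgl: "\<exists>i. S = {i} \<and> e = (\<lambda>x. 0)" if Se: "(S, e) \<in> F" for S e
  proof -
    have d: "dyck S e" using dF Se .
    then have "card S > 0" unfolding dyck_def by (simp add: card_gt_0_iff)
    moreover have "card S < 2" using small Se by auto
    ultimately have "card S = 1" by linarith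
    then obtain i where i: "S = {i}" using card_1_singletonE by blast
    have "e x = 0" for x using d i unfolding dyck_def by (cases "x = i") simp_all
    then show ?thesis using i by blast
  qed
  have "fst ` F \<subseteq> NC_bot n"
  proof
    fix S assume S: "S \<in> fst ` F"
    then obtain e where "(S, e) \<in> F" by force
    then obtain i where "S = {i}" using sgl by blast
    moreover have "S \<subseteq> {1..n}" using partition_on_block_subset[OF p S] .
    ultimately show "S \<in> NC_bot n" unfolding NC_bot_def by blast
  qed
  then have bot: "fst ` F = NC_bot n"
    using partition_on_subset_eq[OF NC_partition_on[OF NC_bot_in_NC] p] by blast
  have zero: "snd z = (\<lambda>x. 0)" if "z \<in> F" for z
    using sgl[of "fst z" "snd z"] that by simp
  have "F = (\<lambda>z. (fst z, \<lambda>y::nat. 0::nat)) ` F"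
  proof (rule set_eqI, rule iffI)
    fix z assume z: "z \<in> F"
    have "z = (fst z, \<lambda>y. 0)" using zero[OF z] by (simp add: prod_eq_iff)
    then show "z \<in> (\<lambda>z. (fst z, \<lambda>y. 0)) ` F" using z by blast
  next
    fix z assume "z \<in> (\<lambda>z. (fst z, \<lambda>y::nat. 0::nat)) ` F"
    then obtain w where w: "w \<in> F" "z = (fst w, \<lambda>y. 0)" by blast
    then have "z = w" using zero[OF w(1)] by (simp add: prod_eq_iff)
    then show "z \<in> F" using w(1) by simp
  qed
  then show ?thesis unfolding dyck_collection_single bot[symmetric] image_image .
qed

lemma NCDyck_split_singleton:
  assumes F: "F \<in> NCDyck n" and Se: "(S, e) \<in> F" "b \<in> S" "S \<noteq> {b}" and d: "dyck (S - {b}) e'"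
  defines "F0 \<equiv> insert (S - {b}, e') (insert ({b}, \<lambda>x. 0) (F - {(S, e)}))"
  shows "F0 \<in> NCDyck n" "card F0 = card F + 1" "(S - {b}, e') \<notin> F" "({b}, \<lambda>x. 0) \<notin> F"
proof -
  have dF: "\<And>S e. (S, e) \<in> F \<Longrightarrow> dyck S e" and inj: "inj_on fst F" and \<pi>: "fst ` F \<in> NC n"
    using F unfolding NCDyck_def by auto
  note p = NC_partition_on[OF \<pi>]
  define G where "G = F - {(S, e)}"
  have SP: "S \<in> fst ` F" using Se(1) by force
  have Sb: "S - {b} \<noteq> {b}" by blast
  have fstG: "fst ` G = fst ` F - {S}"
    unfolding G_def using inj_on_image_set_diff[OF inj, of F "{(S, e)}"] Se(1) by simp
  have nF: "S - {b} \<notin> fst ` F" "{b} \<notin> fst ` F"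
    using partition_on_subblock_notin[OF p SP] Se(2,3) by blast+
  have notin_image: "(T, g) \<notin> H" if "T \<notin> fst ` H" for T g and H :: "(nat set \<times> (nat \<Rightarrow> nat)) set"
  proof
    assume "(T, g) \<in> H"
    then have "T \<in> fst ` H" by (rule image_eqI[rotated]) simp
    then show False using that by blast
  qed
  show "(S - {b}, e') \<notin> F" "({b}, \<lambda>x. 0) \<notin> F" using notin_image nF by simp_all
  have nG: "S - {b} \<notin> fst ` G" "{b} \<notin> fst ` G" unfolding fstG using nF by simp_all
  have injG: "inj_on fst G" using inj_on_diff[OF inj] unfolding G_def .
  have nGG: "(S - {b}, e') \<notin> G" "({b}, \<lambda>x. 0) \<notin> G"
    by (rule notin_image[OF nG(1)], rule notin_image[OF nG(2)])
  have "inj_on fst (insert ({b}, \<lambda>x. 0) G)" unfolding inj_on_insert using injG nG(2) nGG(2) by simp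
  then have "inj_on fst F0" unfolding F0_def G_def[symmetric] inj_on_insert using nG(1) Sb nGG by simp
  moreover have "\<forall>(B, g)\<in>F0. dyck B g" using dF d dyck_single unfolding F0_def by auto
  moreover have "fst ` F0 = insert (S - {b}) (insert {b} (fst ` F - {S}))"
    unfolding F0_def G_def[symmetric] using fstG by simp
  then have "fst ` F0 \<in> NC n" using NC_split_singleton[OF \<pi> SP Se(2,3)] by simp
  ultimately show "F0 \<in> NCDyck n" unfolding NCDyck_def by blast
  have "finite G" using NCDyck_finite(1)[OF F] unfolding G_def by simp
  then have "card F0 = Suc (Suc (card G))" unfolding F0_def G_def[symmetric] using nGG Sb by simp
  moreover have "Suc (card G) = card F" using NCDyck_finite(1)[OF F] Se(1) unfolding G_def by (rule card_Suc_Diff1)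
  ultimately show "card F0 = card F + 1" by simp
qed

lemma NCDyck_split:
  assumes F: "F \<in> NCDyck n" and Se: "(S, e) \<in> F" "2 \<le> card S"
  obtains F0 where "F0 \<in> NCDyck n" "card F0 = card F + 1" "merge_step n F0 F"
proof -
  have dS: "dyck S e" using F Se(1) unfolding NCDyck_def by auto
  obtain a b where ab: "a \<in> S" "b \<in> S" "a < b" "\<forall>z\<in>S. \<not> (a < z \<and> z < b)" "1 \<le> e a"
    "\<forall>x\<in>S. a < x \<longrightarrow> e x = 0"
    using dyck_last_up_step[OF dS Se(2)] by blast
  define A where "A = S - {b}"
  define e' where "e' = e(a := e a - 1)"
  define F0 where "F0 = insert (A, e') (insert ({b}, \<lambda>x::nat. 0::nat) (F - {(S, e)}))"
  have Sb: "S \<noteq> {b}" using Se(2) by auto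
  have d: "dyck A e'" unfolding A_def e'_def using dyck_remove_after_last_up_step[OF dS ab(1-3,5,6)] .
  note F0 = NCDyck_split_singleton[OF F Se(1) ab(2) Sb d[unfolded A_def], folded A_def, folded F0_def]
  have aA: "a \<in> A" and Ab: "A \<union> {b} = S" and Anb: "A \<noteq> {b}" using ab unfolding A_def by auto
  have finA: "finite A" using dS unfolding A_def dyck_def by simp
  have "F0 - {(A, e'), ({b}, \<lambda>x. 0)} = F - {(S, e)}" unfolding F0_def using F0(3,4) Anb by auto
  moreover have "Max {x\<in>A. x < Min {b}} = a" using aA ab(3,4) finA unfolding A_def by (intro Max_eqI) auto
  then have "dyck_merge A e' {b} (\<lambda>x. 0) = (S, e)"
    unfolding dyck_merge_def Ab e'_def using ab(2,3,5,6) by (auto intro!: ext)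
  ultimately have "F = insert (dyck_merge A e' {b} (\<lambda>x. 0)) (F0 - {(A, e'), ({b}, \<lambda>x. 0)})"
    using Se(1) by auto
  moreover have "mergeable A {b}" using Min_le[OF finA aA] ab(3,4) unfolding mergeable_def A_def by auto
  moreover have "(A, e') \<in> F0" "({b}, \<lambda>x. 0) \<in> F0" "(A, e') \<noteq> ({b}, \<lambda>x. 0)" unfolding F0_def using Anb by auto
  ultimately have "merge_step n F0 F" unfolding merge_step_def using F0(1) F by blast
  then show ?thesis using that F0 by blast
qed

lemma dyck_collection_surj:
  assumes "F \<in> NCDyck n"
  obtains c where "c \<in> NC_chains n" "dyck_collection c = F"
  using assms
proof (induction "n - card F" arbitrary: F rule: less_induct)
  case less
  show ?case
  proof (cases "\<forall>(S, e)\<in>F. card S < 2")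
    case True
    have "[NC_bot n] \<in> NC_chains n" using NC_bot_in_NC by (simp add: sat_chains_single)
    then show ?thesis using less.prems NCDyck_singletons[OF _ True] by metis
  next
    case False
    then obtain S e where "(S, e) \<in> F" "2 \<le> card S" by auto
    then obtain F0 where F0: "F0 \<in> NCDyck n" "card F0 = card F + 1" "merge_step n F0 F"
      using NCDyck_split[OF less.prems(2)] by blast
    have "n - card F0 < n - card F" using F0(1,2) NCDyck_finite(3) by fastforce
    then show ?thesis
    proof (rule less.hyps[OF _ _ F0(1)])
      fix c0 assume c0: "c0 \<in> NC_chains n" "dyck_collection c0 = F0"
      then obtain \<sigma> where "c0 @ [\<sigma>] \<in> NC_chains n" "dyck_collection (c0 @ [\<sigma>]) = F"
        using merge_step_lift[OF c0(1)] F0(3) by blast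
      then show thesis using less.prems(1) by blast
    qed
  qed
qed

section \<open>The isomorphism\<close>

abbreviation Q_NC :: "nat \<Rightarrow> nat set set list set set" where
  "Q_NC n \<equiv> Q_carrier (NC n) refines (NC_bot n) lamNC"

text \<open>All chains of a class have the same collection, so any representative may be used.\<close>

definition class_collection :: "nat set set list set \<Rightarrow> (nat set \<times> (nat \<Rightarrow> nat)) set" where
  "class_collection X = dyck_collection (SOME c. c \<in> X)"

lemma NC_chain_equiv_class_eq:
  assumes "(c, d) \<in> NC_chain_equiv n"
  shows "NC_chain_equiv n `` {c} = NC_chain_equiv n `` {d}"
proof -
  have "(d, c) \<in> NC_chain_equiv n" using assms sym_NC_chain_equiv unfolding sym_def by blast
  then show ?thesis using assms trans_NC_chain_equiv[of n] unfolding trans_def by blast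
qed

lemma Q_NC_class: "c \<in> NC_chains n \<Longrightarrow> NC_chain_equiv n `` {c} \<in> Q_NC n \<and> c \<in> NC_chain_equiv n `` {c}"
  unfolding Q_carrier_def chain_equiv_def by blast

lemma Q_NC_nonempty: "X \<in> Q_NC n \<Longrightarrow> \<exists>c. c \<in> X"
  unfolding Q_carrier_def chain_equiv_def by blast

lemma Q_NC_member:
  assumes "X \<in> Q_NC n" "c \<in> X"
  shows "c \<in> NC_chains n" "class_collection X = dyck_collection c"
proof -
  obtain c0 where c0: "c0 \<in> NC_chains n" "X = NC_chain_equiv n `` {c0}"
    using assms(1) unfolding Q_carrier_def by blast
  have inv: "d \<in> NC_chains n" "dyck_collection d = dyck_collection c0" if "d \<in> X" for d
    using NC_chain_equiv_dyck_collection[of c0 d n] c0 that by blast+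
  show "c \<in> NC_chains n" using inv assms(2) by blast
  have "(SOME c. c \<in> X) \<in> X" using assms(2) by (rule someI)
  then show "class_collection X = dyck_collection c" unfolding class_collection_def using inv assms(2) by metis
qed

lemma inj_on_class_collection: "inj_on class_collection (Q_NC n)"
proof (rule inj_onI)
  fix X Y assume X: "X \<in> Q_NC n" and Y: "Y \<in> Q_NC n" and eq: "class_collection X = class_collection Y"
  obtain c where c: "c \<in> NC_chains n" "X = NC_chain_equiv n `` {c}" using X unfolding Q_carrier_def by blast
  obtain d where d: "d \<in> NC_chains n" "Y = NC_chain_equiv n `` {d}" using Y unfolding Q_carrier_def by blast
  have "c \<in> X" "d \<in> Y" using Q_NC_class c d by blast+
  then have "dyck_collection c = dyck_collection d" using Q_NC_member(2)[OF X] Q_NC_member(2)[OF Y] eq by simp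
  then have "(c, d) \<in> NC_chain_equiv n" by (rule NC_chain_equiv_if_dyck_collection_eq[OF c(1) d(1)])
  then show "X = Y" using NC_chain_equiv_class_eq c(2) d(2) by simp
qed

lemma class_collection_image: "class_collection ` Q_NC n = NCDyck n"
proof
  show "class_collection ` Q_NC n \<subseteq> NCDyck n"
  proof
    fix F assume "F \<in> class_collection ` Q_NC n"
    then obtain X c where "X \<in> Q_NC n" "c \<in> X" "F = class_collection X" using Q_NC_nonempty by blast
    then show "F \<in> NCDyck n" using Q_NC_member dyck_collection_NCDyck by metis
  qed
  show "NCDyck n \<subseteq> class_collection ` Q_NC n"
  proof
    fix F assume "F \<in> NCDyck n"
    then obtain c where c: "c \<in> NC_chains n" "dyck_collection c = F" using dyck_collection_surj by blast
    then show "F \<in> class_collection ` Q_NC n" using Q_NC_class[OF c(1)] Q_NC_member by (metis image_eqI)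
  qed
qed

abbreviation Q_NC_step :: "nat \<Rightarrow> (nat set set list set \<times> nat set set list set) set" where
  "Q_NC_step n \<equiv> {(X, Y). X \<in> Q_NC n \<and> Y \<in> Q_NC n \<and> (\<exists>c\<in>X. \<exists>d\<in>Y. prefix c d)}"

lemma NCDyck_le_if_Q_NC_step:
  assumes "(X, Y) \<in> Q_NC_step n"
  shows "NCDyck_le n (class_collection X) (class_collection Y)"
proof -
  obtain c d where X: "X \<in> Q_NC n" "c \<in> X" and Y: "Y \<in> Q_NC n" "d \<in> Y" and cd: "prefix c d"
    using assms by blast
  show ?thesis using NCDyck_le_prefix[OF Q_NC_member(1)[OF X] Q_NC_member(1)[OF Y] cd]
    unfolding Q_NC_member(2)[OF X] Q_NC_member(2)[OF Y] .
qed

lemma Q_NC_step_if_merge_steps: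
  assumes "(F1, F2) \<in> {(F, F'). merge_step n F F'}\<^sup>*" "X \<in> Q_NC n" "class_collection X = F1"
  obtains Y where "Y \<in> Q_NC n" "class_collection Y = F2" "(X, Y) \<in> (Q_NC_step n)\<^sup>*"
  using assms(1) that
proof (induction arbitrary: thesis rule: rtrancl_induct)
  case base then show ?case using assms(2,3) by blast
next
  case (step F F')
  then obtain Y where Y: "Y \<in> Q_NC n" "class_collection Y = F" "(X, Y) \<in> (Q_NC_step n)\<^sup>*" by blast
  obtain c where c: "c \<in> Y" using Q_NC_nonempty[OF Y(1)] by blast
  have cS: "c \<in> NC_chains n" and fc: "class_collection Y = dyck_collection c" using Q_NC_member[OF Y(1) c] by auto
  obtain \<sigma> where \<sigma>: "c @ [\<sigma>] \<in> NC_chains n" "dyck_collection (c @ [\<sigma>]) = F'"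
    using merge_step_lift[OF cS] step(2) Y(2) fc by auto
  let ?Z = "NC_chain_equiv n `` {c @ [\<sigma>]}"
  have Z: "?Z \<in> Q_NC n" "c @ [\<sigma>] \<in> ?Z" using Q_NC_class[OF \<sigma>(1)] by auto
  moreover have "prefix c (c @ [\<sigma>])" by simp
  ultimately have YZ: "(Y, ?Z) \<in> Q_NC_step n" using Y(1) c by blast
  have "(X, ?Z) \<in> (Q_NC_step n)\<^sup>*" using Y(3) YZ by (rule rtrancl.rtrancl_into_rtrancl)
  moreover have "class_collection ?Z = F'" using Q_NC_member(2)[OF Z] \<sigma>(2) by simp
  ultimately show ?case using step.prems Z(1) by blast
qed

lemma NCDyck_le_if_Q_le:
  assumes "Q_le (NC n) refines (NC_bot n) lamNC X Y"
  shows "NCDyck_le n (class_collection X) (class_collection Y)"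
  using assms unfolding Q_le_def
proof (induction rule: trancl_induct)
  case (base Y)
  then show ?case by (rule NCDyck_le_if_Q_NC_step)
next
  case (step Y Z)
  then show ?case using NCDyck_le_if_Q_NC_step[OF step(2)] unfolding NCDyck_le_def by simp
qed

lemma Q_le_if_NCDyck_le:
  assumes X: "X \<in> Q_NC n" and Y: "Y \<in> Q_NC n" and le: "NCDyck_le n (class_collection X) (class_collection Y)"
  shows "Q_le (NC n) refines (NC_bot n) lamNC X Y"
proof -
  obtain Y' where Y': "Y' \<in> Q_NC n" "class_collection Y' = class_collection Y" "(X, Y') \<in> (Q_NC_step n)\<^sup>*"
    using Q_NC_step_if_merge_steps[OF _ X refl] le unfolding NCDyck_le_def by blast
  have "Y' = Y" using inj_onD[OF inj_on_class_collection Y'(2) Y'(1) Y] .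
  then have "(X, Y) \<in> (Q_NC_step n)\<^sup>*" using Y'(3) by simp
  moreover have "(X, X) \<in> Q_NC_step n" using X Q_NC_nonempty[OF X] by blast
  ultimately have "(X, Y) \<in> (Q_NC_step n)\<^sup>+" by (cases "X = Y") (auto simp: rtrancl_eq_or_trancl)
  then show ?thesis unfolding Q_le_def .
qed

theorem theorem5p7:
  fixes n :: nat
  assumes "n \<ge> 1"
  shows "order_iso (Q_carrier (NC n) refines (NC_bot n) lamNC)
                   (Q_le (NC n) refines (NC_bot n) lamNC)
                   (NCDyck n) (NCDyck_le n)"
  unfolding order_iso_def
proof (intro exI conjI ballI)
  show "bij_betw class_collection (Q_NC n) (NCDyck n)"
    unfolding bij_betw_def using inj_on_class_collection class_collection_image by blast
  show "Q_le (NC n) refines (NC_bot n) lamNC X Y \<longleftrightarrow> NCDyck_le n (class_collection X) (class_collection Y)"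
    if "X \<in> Q_NC n" "Y \<in> Q_NC n" for X Y
    using NCDyck_le_if_Q_le Q_le_if_NCDyck_le[OF that] by blast
qed

end
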